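(* There is an absolute constant $c_0>0$ such that if $\kappa\le c_0$ and $\sqrt\Gamma\le c_0\kappa$ then the following holds. Let $\mathbb K=\{0,1\}^3$ and let $\boldsymbol\theta=(\theta_{\boldsymbol r})_{\boldsymbol r\in\mathbb K}$ be angles such that $|S^{(\alpha)}_{\boldsymbol r}-S^{(\alpha)}_{\boldsymbol r+\hat{\mathrm e}_\alpha}|<\Gamma$ for every nearest-neighbour pair $\boldsymbol r,\boldsymbol r+\hat{\mathrm e}_\alpha$ in $\mathbb K$, but such that it is not the case that all spins are within angle $\kappa$ of one single $\hat{\mathrm w}_\tau$. Let $\boldsymbol r\in\mathbb K$. Then exactly one of the following holds: (1) $|\theta_{\boldsymbol r'}-\theta_{\boldsymbol r}|<4\Gamma/\kappa$ for all $\boldsymbol r'\in\mathbb K$; (2) there exists $\alpha\in\{1,2,3\}$ such that $|\theta_{\boldsymbol r'}-\theta_{\boldsymbol r}|<4\Gamma/\kappa$ for all $\boldsymbol r'\in\mathbb K$ with $\boldsymbol r-\boldsymbol r'\perp\hat{\mathrm e}_\alpha$, while for the remaining $\boldsymbol r'\in\mathbb K$, $|\theta_{\boldsymbol r'}-\tilde\theta_{\boldsymbol r}|<4\Gamma/\kappa$, where $\tilde\theta_{\boldsymbol r}=2\phi_\alpha-\theta_{\boldsymbol r}$ is the reflection of $\theta_{\boldsymbol r}$ through the $\alpha$-th of $\hat{\mathrm a},\hat{\mathrm b},\hat{\mathrm c}$. (Angular differences mod $2\pi$.)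
   Context: $\boldsymbol S_{\boldsymbol r}=(\cos\theta_{\boldsymbol r},\sin\theta_{\boldsymbol r})$; $\hat{\mathrm a},\hat{\mathrm b},\hat{\mathrm c}$ are unit vectors at angles $\phi_1=0,\phi_2=\tfrac{2\pi}3,\phi_3=-\tfrac{2\pi}3$, $S^{(\alpha)}_{\boldsymbol r}=\cos(\theta_{\boldsymbol r}-\phi_\alpha)$; $\hat{\mathrm w}_\tau=(\cos\frac{\pi\tau}3,\sin\frac{\pi\tau}3)$, $\tau=1,\dots,6$. *)

theory Defs
  imports Complex_Main
begin

text \<open>Sites of the cube K = {0,1}^3, encoded as functions nat => bool
  whose only possibly-True coordinates are 1, 2, 3 (coordinate alpha = True means r_alpha = 1).\<close>
definition cube :: "(nat \<Rightarrow> bool) set" where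
  "cube = {r. \<forall>i. i \<notin> {1,2,3} \<longrightarrow> \<not> r i}"

text \<open>Angles phi_1 = 0, phi_2 = 2pi/3, phi_3 = -2pi/3 of the unit vectors a, b, c.\<close>
definition phi :: "nat \<Rightarrow> real" where
  "phi \<alpha> = (if \<alpha> = 1 then 0 else if \<alpha> = 2 then 2*pi/3 else - 2*pi/3)"

definition Scomp :: "((nat \<Rightarrow> bool) \<Rightarrow> real) \<Rightarrow> nat \<Rightarrow> (nat \<Rightarrow> bool) \<Rightarrow> real" where
  "Scomp \<theta> \<alpha> r = cos (\<theta> r - phi \<alpha>)"

definition angdist :: "real \<Rightarrow> real \<Rightarrow> real" where
  "angdist x y = Inf {\<bar>x - y - 2 * pi * of_int k\<bar> | k. True}"

definition wang :: "nat \<Rightarrow> real" where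
  "wang \<tau> = pi * real \<tau> / 3"

end

(*
  Along an edge in direction alpha the component cos (theta - phi_alpha) changes by less than
  Gamma, so the edge either preserves theta or reflects it through phi_alpha, up to an error
  Gamma / |sin (theta - phi_alpha)|. Since cos (3 theta) is the Chebyshev polynomial T_3 of every
  component, it is almost constant on the cube, and there are two regimes.

  If |sin (3 theta)| is of order kappa, every edge is rigid in this sense. Going round a square
  face the two composite maps must agree, and since reflections through different axes do not
  commute, parallel edges have the same type and at most one direction reflects.

  Otherwise every spin is close to one of the six directions m pi / 3. An edge in direction
  alpha cannot move a spin onto or off the alpha-axis, so no square face of directions alpha,
  beta meets both of these axes; hence only two axes occur, separated by the third direction,
  which is the reflecting one. The remaining edges are controlled by going round a face.

  Composing edges along paths of length at most 3 gives one of the two alternatives. Both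
  cannot hold, since theta_r would then be close to its own reflection, hence to an axis, and
  all spins would be close to a single w_tau.
*)
theory Submission
  imports Defs
begin

section \<open>Angles modulo \<open>2 pi\<close>\<close>

definition angle_near :: "real \<Rightarrow> real \<Rightarrow> real \<Rightarrow> bool" where
  "angle_near x y e \<longleftrightarrow> (\<exists>k::int. \<bar>x - y - 2 * pi * of_int k\<bar> < e)"

lemma angdist_less_iff: "angdist x y < e \<longleftrightarrow> angle_near x y e"
proof -
  have "bdd_below {\<bar>x - y - 2 * pi * of_int k\<bar> | k::int. True}"
    by (rule bdd_belowI[of _ 0]) auto
  then show ?thesis
    unfolding angdist_def angle_near_def by (subst cInf_less_iff) auto
qed

lemma angle_near_pos: "angle_near x y e \<Longrightarrow> 0 < e"
  unfolding angle_near_def by (auto intro: le_less_trans[OF abs_ge_zero])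

lemma angle_near_refl: "0 < e \<Longrightarrow> angle_near x x e"
  unfolding angle_near_def by (intro exI[of _ 0]) simp

lemma angle_near_mono: "angle_near x y e \<Longrightarrow> e \<le> e' \<Longrightarrow> angle_near x y e'"
  unfolding angle_near_def by (meson order_less_le_trans)

lemma angle_near_sym: "angle_near x y e \<Longrightarrow> angle_near y x e"
  unfolding angle_near_def
proof (elim exE)
  fix k :: int
  assume "\<bar>x - y - 2 * pi * of_int k\<bar> < e"
  then have "\<bar>y - x - 2 * pi * of_int (- k)\<bar> < e"
    by (simp add: abs_minus_commute algebra_simps)
  then show "\<exists>k::int. \<bar>y - x - 2 * pi * of_int k\<bar> < e" ..
qed

lemma angle_near_trans:
  "angle_near x y e1 \<Longrightarrow> angle_near y z e2 \<Longrightarrow> angle_near x z (e1 + e2)"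
  unfolding angle_near_def
proof (elim exE)
  fix k1 k2 :: int
  assume "\<bar>x - y - 2 * pi * of_int k1\<bar> < e1" "\<bar>y - z - 2 * pi * of_int k2\<bar> < e2"
  then have "\<bar>x - z - 2 * pi * of_int (k1 + k2)\<bar> < e1 + e2"
    by (smt (verit, ccfv_threshold) of_int_add distrib_left)
  then show "\<exists>k::int. \<bar>x - z - 2 * pi * of_int k\<bar> < e1 + e2" ..
qed

lemma angle_near_reflect: "angle_near x y e \<Longrightarrow> angle_near (c - x) (c - y) e"
  unfolding angle_near_def
proof (elim exE)
  fix k :: int
  assume "\<bar>x - y - 2 * pi * of_int k\<bar> < e"
  then have "\<bar>(c - x) - (c - y) - 2 * pi * of_int (- k)\<bar> < e"
    by (simp add: abs_minus_commute algebra_simps)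
  then show "\<exists>k::int. \<bar>(c - x) - (c - y) - 2 * pi * of_int k\<bar> < e" ..
qed

lemma angle_near_add_2pi: "angle_near x (y + 2 * pi * of_int j) e \<longleftrightarrow> angle_near x y e"
proof -
  have "\<bar>x - (y + 2 * pi * of_int j) - 2 * pi * of_int k\<bar> = \<bar>x - y - 2 * pi * of_int (j + k)\<bar>"
    for k :: int
    by (simp add: algebra_simps)
  moreover have "\<exists>j'. k = j + j'" for k :: int
    by (intro exI[of _ "k - j"]) simp
  ultimately show ?thesis
    unfolding angle_near_def by metis
qed

section \<open>Trigonometric estimates\<close>

lemma mult_cos_le_sin:
  assumes "0 \<le> t" "t \<le> pi/2"
  shows "t * cos t \<le> sin t"
proof -
  let ?f = "\<lambda>x. sin x - x * cos x"
  have "?f 0 \<le> ?f t"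
  proof (rule DERIV_nonneg_imp_nondecreasing[OF assms(1)])
    fix x assume x: "0 \<le> x" "x \<le> t"
    have "DERIV ?f x :> x * sin x"
      by (auto intro!: derivative_eq_intros simp: algebra_simps)
    moreover have "0 \<le> x * sin x"
      using x assms by (intro mult_nonneg_nonneg sin_ge_zero) auto
    ultimately show "\<exists>y. DERIV ?f x :> y \<and> 0 \<le> y" by blast
  qed
  then show ?thesis by simp
qed

lemma one_minus_square_half_le_cos: "1 - t\<^sup>2 / 2 \<le> cos (t::real)"
proof -
  have "cos t = 1 - 2 * (sin (t/2))^2"
    using cos_double_sin[of "t/2"] by simp
  moreover have "(sin (t/2))^2 \<le> (t/2)^2"
    using abs_sin_x_le_abs_x[of "t/2"] by (metis abs_ge_zero power2_abs power_mono)
  ultimately show ?thesis by (simp add: power_divide)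
qed

lemma le_sin_if_sin_small:
  assumes t: "0 \<le> t" "t \<le> pi/2" and small: "sin t \<le> 1/100"
  shows "t \<le> 101/100 * sin t"
proof -
  have "t < pi/4"
  proof (rule ccontr)
    assume "\<not> t < pi/4"
    then have "sin (pi/4) \<le> sin t"
      using t by (intro sin_monotone_2pi_le) auto
    moreover have "1 \<le> sqrt (2::real)" by simp
    ultimately show False
      using small sin_45 by linarith
  qed
  then have "cos (pi/4) \<le> cos t"
    using t by (intro cos_monotone_0_pi_le) auto
  moreover have "14/10 \<le> sqrt (2::real)"
    by (rule real_le_rsqrt) (simp add: power2_eq_square)
  ultimately have "t * (7/10) \<le> t * cos t"
    using t cos_45 by (intro mult_left_mono) auto
  then have "t \<le> 1/70"
    using mult_cos_le_sin[OF t] small by linarith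
  then have "t\<^sup>2 \<le> (1/70)\<^sup>2"
    using t by (intro power_mono) auto
  then have "100/101 \<le> cos t"
    using one_minus_square_half_le_cos[of t] by (simp add: power2_eq_square)
  then have "t * (100/101) \<le> t * cos t"
    using t by (intro mult_left_mono) auto
  then show ?thesis
    using mult_cos_le_sin[OF t] by simp
qed

lemma abs_sin_add_int_mult_pi: "\<bar>sin (z + of_int k * pi)\<bar> = \<bar>sin z\<bar>"
proof -
  have sin0: "sin (of_int k * pi) = 0"
    by (simp add: sin_times_pi_eq_0)
  then have "(cos (of_int k * pi))^2 = 1"
    using sin_cos_squared_add[of "of_int k * pi"] by simp
  then have "\<bar>cos (of_int k * pi)\<bar> = 1"
    by (simp add: abs_square_eq_1)
  then show ?thesis
    by (simp add: sin_add sin0 abs_mult)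
qed

lemma near_int_mult_pi_if_sin_small:
  assumes "\<bar>sin z\<bar> \<le> 1/100"
  shows "\<exists>k::int. \<bar>z - of_int k * pi\<bar> \<le> 101/100 * \<bar>sin z\<bar>"
proof -
  define k where "k = \<lfloor>z/pi + 1/2\<rfloor>"
  define w where "w = z - of_int k * pi"
  have "of_int k \<le> z/pi + 1/2" "z/pi + 1/2 < of_int k + 1"
    unfolding k_def by linarith+
  then have w: "-(pi/2) \<le> w" "w \<le> pi/2"
    unfolding w_def by (simp_all add: field_simps)
  have "\<bar>sin w\<bar> = \<bar>sin z\<bar>"
    using abs_sin_add_int_mult_pi[of w k] unfolding w_def by simp
  moreover have "sin \<bar>w\<bar> = \<bar>sin w\<bar>"
    using w sin_ge_zero[of w] sin_ge_zero[of "-w"] by (cases "0 \<le> w") auto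
  ultimately have "\<bar>w\<bar> \<le> 101/100 * \<bar>sin z\<bar>"
    using le_sin_if_sin_small[of "\<bar>w\<bar>"] w assms by auto
  then show ?thesis
    unfolding w_def by blast
qed

lemma angle_near_if_half_sin_small:
  assumes "\<bar>sin ((x - y)/2)\<bar> \<le> 1/100" "202/100 * \<bar>sin ((x - y)/2)\<bar> < e"
  shows "angle_near x y e"
proof -
  obtain k :: int where k: "\<bar>(x - y)/2 - of_int k * pi\<bar> \<le> 101/100 * \<bar>sin ((x - y)/2)\<bar>"
    using near_int_mult_pi_if_sin_small[OF assms(1)] by blast
  have "\<bar>x - y - 2 * pi * of_int k\<bar> = 2 * \<bar>(x - y)/2 - of_int k * pi\<bar>"
    by (simp add: field_simps abs_mult[symmetric])
  also have "\<dots> \<le> 202/100 * \<bar>sin ((x - y)/2)\<bar>"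
    using k by simp
  finally have "\<bar>x - y - 2 * pi * of_int k\<bar> < e"
    using assms(2) by linarith
  then show ?thesis
    unfolding angle_near_def by blast
qed

lemma smaller_factor_bound:
  fixes P M s G :: real
  assumes "0 \<le> M" "M \<le> P" "2 * P * M < G" "s \<le> P + M" "0 < s" "s \<le> 1" "G \<le> s\<^sup>2 / 10000"
  shows "M \<le> 1/100" "202/100 * M < 21/20 * G / s"
proof -
  have "M * M \<le> P * M"
    using assms(1,2) by (rule mult_right_mono[rotated])
  moreover have "2 * (P * M) < G"
    using assms(3) by (simp add: mult.assoc)
  moreover have "G * 10000 \<le> s * s"
    using assms(7) by (simp add: power2_eq_square)
  ultimately have "10000 * (M * M) < s * s"
    using mult_nonneg_nonneg[OF assms(1,1)] by linarith
  then have "(100 * M)^2 < s^2"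
    by (simp add: power2_eq_square)
  then have Ms: "M < s/100"
    using assms(5) power_less_imp_less_base[of "100 * M" 2 s] by simp
  then show "M \<le> 1/100"
    using assms(6) by linarith
  have "2 * (99/100 * s) * M \<le> 2 * P * M"
    using Ms assms by (intro mult_right_mono) auto
  then have "99/50 * (M * s) < G"
    using assms(3) by (simp add: algebra_simps)
  moreover have "0 \<le> M * s"
    using assms(1,5) by simp
  ultimately have "202/100 * M * s < 21/20 * G"
    by linarith
  then show "202/100 * M < 21/20 * G / s"
    using assms(5) by (simp add: field_simps)
qed

lemma abs_sin_diff_le: "\<bar>sin (A - B)\<bar> \<le> \<bar>sin A\<bar> + \<bar>sin (B::real)\<bar>"
proof -
  have "\<bar>sin A * cos B - cos A * sin B\<bar> \<le> \<bar>sin A\<bar> * \<bar>cos B\<bar> + \<bar>cos A\<bar> * \<bar>sin B\<bar>"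
    using abs_triangle_ineq4[of "sin A * cos B" "cos A * sin B"] by (simp add: abs_mult)
  also have "\<dots> \<le> \<bar>sin A\<bar> * 1 + 1 * \<bar>sin B\<bar>"
    by (intro add_mono mult_mono) auto
  finally show ?thesis
    by (simp add: sin_diff)
qed

text \<open>The two alternatives correspond to the two factors of
  \<open>cos u - cos w = 2 sin ((u + w)/2) sin ((w - u)/2)\<close>, one of which must be small.\<close>
lemma near_or_near_reflection:
  assumes close: "\<bar>cos (a - p) - cos (b - p)\<bar> < G"
    and s: "s \<le> \<bar>sin (a - p)\<bar>" "0 < s" and G: "G \<le> s\<^sup>2 / 10000"
  shows "angle_near b a (21/20 * G / s) \<or> angle_near b (2 * p - a) (21/20 * G / s)"
proof -
  define P where "P = \<bar>sin ((b - (2 * p - a))/2)\<bar>"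
  define M where "M = \<bar>sin ((b - a)/2)\<bar>"
  have "cos (a - p) - cos (b - p) = 2 * sin ((b - (2 * p - a))/2) * sin ((b - a)/2)"
    using cos_diff_cos[of "a - p" "b - p"] by (simp add: algebra_simps)
  then have PM: "2 * P * M < G"
    using close unfolding P_def M_def by (simp add: abs_mult)
  then have MP: "2 * M * P < G"
    by (simp add: ac_simps)
  have "a - p = (b - (2 * p - a))/2 - (b - a)/2"
    by (simp add: field_simps)
  then have sPM: "s \<le> P + M" "s \<le> M + P"
    using s abs_sin_diff_le[of "(b - (2 * p - a))/2" "(b - a)/2"]
    unfolding P_def M_def by auto
  have "s \<le> 1"
    using s(1) abs_sin_le_one[of "a - p"] by linarith
  have "0 \<le> M" "0 \<le> P"
    unfolding M_def P_def by simp_all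
  show ?thesis
  proof (cases "M \<le> P")
    case True
    have "angle_near b a (21/20 * G / s)"
      using smaller_factor_bound[OF \<open>0 \<le> M\<close> True PM sPM(1) s(2) \<open>s \<le> 1\<close> G]
      unfolding M_def by (rule angle_near_if_half_sin_small)
    then show ?thesis ..
  next
    case False
    have "angle_near b (2 * p - a) (21/20 * G / s)"
      using smaller_factor_bound[OF \<open>0 \<le> P\<close> _ MP sPM(2) s(2) \<open>s \<le> 1\<close> G] False
      unfolding P_def by (intro angle_near_if_half_sin_small) auto
    then show ?thesis ..
  qed
qed

definition phi_idx :: "nat \<Rightarrow> int" where
  "phi_idx \<alpha> = (if \<alpha> = 1 then 0 else if \<alpha> = 2 then 2 else -2)"

lemma phi_eq: "phi \<alpha> = of_int (phi_idx \<alpha>) * pi / 3"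
  by (simp add: phi_def phi_idx_def)

lemma phi_triple_period: "cos (3 * (z - phi \<alpha>)) = cos (3 * z)" "sin (3 * (z - phi \<alpha>)) = sin (3 * z)"
  by (simp_all add: phi_def right_diff_distrib cos_diff sin_diff)

lemma cheb3_diff_le:
  fixes c d :: real
  assumes "\<bar>c\<bar> \<le> 1" "\<bar>d\<bar> \<le> 1"
  shows "\<bar>(4 * c^3 - 3 * c) - (4 * d^3 - 3 * d)\<bar> \<le> 9 * \<bar>c - d\<bar>"
proof -
  have eq: "(4 * c^3 - 3 * c) - (4 * d^3 - 3 * d) = (c - d) * (4 * (c*c + c*d + d*d) - 3)"
    by (simp add: algebra_simps power3_eq_cube)
  have "c * c \<le> 1" "d * d \<le> 1" "\<bar>c * d\<bar> \<le> 1"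
    using assms mult_le_one[of "\<bar>c\<bar>" "\<bar>c\<bar>"] mult_le_one[of "\<bar>d\<bar>" "\<bar>d\<bar>"]
    by (simp_all add: abs_mult abs_mult_self mult_le_one)
  moreover have "c*c + c*d + d*d = (c + d/2)^2 + 3/4 * d^2"
    by (simp add: power2_eq_square algebra_simps)
  then have "0 \<le> c*c + c*d + d*d"
    by simp
  ultimately have "\<bar>4 * (c*c + c*d + d*d) - 3\<bar> \<le> 9"
    by (simp add: abs_le_iff)
  then show ?thesis
    unfolding eq abs_mult by (simp add: mult.commute mult_left_mono)
qed

text \<open>Since \<open>3 phi \<alpha>\<close> is a multiple of \<open>2 pi\<close>, \<open>cos (3 \<theta>)\<close> is the Chebyshev polynomial
  \<open>T\<^sub>3\<close> of every component \<open>cos (\<theta> - phi \<alpha>)\<close>; hence it changes little along every edge.\<close>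
lemma cos_triple_diff_le:
  "\<bar>cos (3 * x) - cos (3 * y)\<bar> \<le> 9 * \<bar>cos (x - phi \<alpha>) - cos (y - phi \<alpha>)\<bar>"
  using cheb3_diff_le[of "cos (x - phi \<alpha>)" "cos (y - phi \<alpha>)"]
  by (metis abs_cos_le_one cos_treble_cos phi_triple_period(1))

lemma abs_sin_triple_le: "\<bar>sin (3 * x)\<bar> \<le> 3 * \<bar>sin (x - phi \<alpha>)\<bar>"
proof -
  have "sin (3 * y) = sin y * (3 - 4 * (sin y)^2)" for y :: real
  proof -
    have "sin (3 * y) = sin (2 * y + y)" by simp
    also have "\<dots> = sin y * (3 - 4 * (sin y)^2)"
      unfolding sin_add sin_double cos_double using sin_cos_squared_add3[of y] by algebra
    finally show ?thesis .
  qed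
  then have eq: "sin (3 * x) = sin (x - phi \<alpha>) * (3 - 4 * (sin (x - phi \<alpha>))^2)"
    using phi_triple_period(2)[of x \<alpha>] by metis
  have "(sin (x - phi \<alpha>))^2 \<le> 1"
    by (simp add: abs_square_le_1)
  then have "\<bar>3 - 4 * (sin (x - phi \<alpha>))^2\<bar> \<le> 3"
    by (simp add: abs_le_iff)
  then show ?thesis
    unfolding eq abs_mult using mult_left_mono[of _ 3 "\<bar>sin (x - phi \<alpha>)\<bar>"]
    by (metis abs_ge_zero mult.commute)
qed

definition edge_map :: "nat \<Rightarrow> bool \<Rightarrow> real \<Rightarrow> real" where
  "edge_map \<alpha> t x = (if t then 2 * phi \<alpha> - x else x)"

lemma angle_near_edge_map:
  "angle_near x y e \<Longrightarrow> angle_near (edge_map \<alpha> t x) (edge_map \<alpha> t y) e"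
  by (simp add: edge_map_def angle_near_reflect)

section \<open>Edge maps around a square face\<close>

text \<open>The reflections \<open>2 phi \<alpha> - x\<close> generate the maps \<open>x \<mapsto> s x + 2 pi N / 3\<close>
  with \<open>s = \<plusminus>1\<close>, encoded by the pair \<open>(s, N)\<close>.\<close>
definition affine_angle :: "int \<times> int \<Rightarrow> real \<Rightarrow> real" where
  "affine_angle p x = of_int (fst p) * x + 2 * pi / 3 * of_int (snd p)"

definition edge_map_coeffs :: "nat \<Rightarrow> bool \<Rightarrow> int \<times> int \<Rightarrow> int \<times> int" where
  "edge_map_coeffs \<alpha> t p = (if t then (- fst p, phi_idx \<alpha> - snd p) else p)"

lemma edge_map_affine_angle:
  "edge_map \<alpha> t (affine_angle p x) = affine_angle (edge_map_coeffs \<alpha> t p) x"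
  by (simp add: edge_map_def affine_angle_def edge_map_coeffs_def phi_eq algebra_simps)

lemma affine_angles_near_imp_eq:
  assumes near: "angle_near (affine_angle (s1, N1) x) (affine_angle (s2, N2) x) e"
    and s: "s1 \<in> {1, -1}" "s2 \<in> {1, -1}" and e: "e < 1" "3/2 * e < \<bar>sin (3 * x)\<bar>"
  shows "s1 = s2 \<and> (N1 - N2) mod 3 = 0"
proof -
  obtain k :: int where k:
    "\<bar>affine_angle (s1, N1) x - affine_angle (s2, N2) x - 2 * pi * of_int k\<bar> < e"
    using near unfolding angle_near_def by blast
  define M where "M = N1 - N2 - 3 * k"
  define d where "d = affine_angle (s1, N1) x - affine_angle (s2, N2) x - 2 * pi * of_int k"
  have d: "d = (of_int s1 - of_int s2) * x + 2 * pi / 3 * of_int M" "\<bar>d\<bar> < e"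
    using k unfolding d_def M_def affine_angle_def by (simp_all add: algebra_simps)
  show ?thesis
  proof (cases "s1 = s2")
    case True
    then have "2 * pi / 3 * \<bar>of_int M\<bar> < 1"
      using d e by (simp add: abs_mult)
    moreover have "1 \<le> \<bar>of_int M :: real\<bar> \<Longrightarrow> 2 * pi / 3 * 1 \<le> 2 * pi / 3 * \<bar>of_int M :: real\<bar>"
      by (intro mult_left_mono) auto
    moreover have "1 < 2 * pi / 3"
      using pi_ge_two by simp
    ultimately have "M = 0"
      by linarith
    then show ?thesis
      using True unfolding M_def by simp
  next
    case False
    then consider "3 * x = 3/2 * d + of_int (- M) * pi" | "3 * x = - (3/2 * d) + of_int M * pi"
      using s d(1) by (auto simp: algebra_simps)
    then have "\<bar>sin (3 * x)\<bar> = \<bar>sin (3/2 * d)\<bar>"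
      by cases (simp_all only: abs_sin_add_int_mult_pi sin_minus abs_minus_cancel)
    also have "\<dots> \<le> 3/2 * \<bar>d\<bar>"
      using abs_sin_x_le_abs_x[of "3/2 * d"] by simp
    finally show ?thesis
      using d(2) e by linarith
  qed
qed

text \<open>Going round a square face, the composites of the edge maps along the two paths
  must nearly agree at \<open>x0\<close>, hence agree as maps. This forces opposite edges to be of
  the same type, and excludes reflections in both directions, since the reflections
  through two different axes do not commute.\<close>
lemma square_edge_types:
  assumes "\<alpha> \<in> {1,2,3}" "\<beta> \<in> {1,2,3}" "\<alpha> \<noteq> \<beta>"
    and "angle_near x1 (edge_map \<alpha> t1 x0) e" "angle_near x2 (edge_map \<beta> t2 x1) e"
      "angle_near x3 (edge_map \<beta> t3 x0) e" "angle_near x2 (edge_map \<alpha> t4 x3) e"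
    and e: "e < 1/4" "6 * e < \<bar>sin (3 * x0)\<bar>"
  shows "t1 = t4 \<and> t2 = t3 \<and> \<not> (t1 \<and> t2)"
proof -
  have "angle_near x2 (edge_map \<beta> t2 (edge_map \<alpha> t1 x0)) (e + e)"
    using assms(5) angle_near_edge_map[OF assms(4)] by (rule angle_near_trans)
  moreover have "angle_near x2 (edge_map \<alpha> t4 (edge_map \<beta> t3 x0)) (e + e)"
    using assms(7) angle_near_edge_map[OF assms(6)] by (rule angle_near_trans)
  ultimately have "angle_near (edge_map \<beta> t2 (edge_map \<alpha> t1 x0))
      (edge_map \<alpha> t4 (edge_map \<beta> t3 x0)) (4 * e)"
    using angle_near_trans[OF angle_near_sym] by fastforce
  moreover have "x0 = affine_angle (1, 0) x0"
    by (simp add: affine_angle_def)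
  moreover define p where "p = edge_map_coeffs \<beta> t2 (edge_map_coeffs \<alpha> t1 (1, 0))"
  moreover define q where "q = edge_map_coeffs \<alpha> t4 (edge_map_coeffs \<beta> t3 (1, 0))"
  ultimately have near: "angle_near (affine_angle (fst p, snd p) x0) (affine_angle (fst q, snd q) x0) (4 * e)"
    by (metis edge_map_affine_angle prod.collapse)
  have "fst p \<in> {1, -1}" "fst q \<in> {1, -1}"
    unfolding p_def q_def edge_map_coeffs_def by auto
  then have "fst p = fst q \<and> (snd p - snd q) mod 3 = 0"
    using e by (intro affine_angles_near_imp_eq[OF near]) auto
  then show ?thesis
    using assms(1-3) unfolding p_def q_def
    by (cases t1; cases t2; cases t3; cases t4) (auto simp: edge_map_coeffs_def phi_idx_def)
qed

text \<open>The direction \<open>m pi / 3\<close> lies on the \<open>\<alpha>\<close>-th axis \<open>\<plusminus>(cos (phi \<alpha>), sin (phi \<alpha>))\<close>.\<close>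
definition on_axis :: "nat \<Rightarrow> int \<Rightarrow> bool" where
  "on_axis \<alpha> m \<longleftrightarrow> (m - phi_idx \<alpha>) mod 3 = 0"

lemma reflect_label: "2 * phi \<alpha> - of_int m * pi / 3 = of_int (2 * phi_idx \<alpha> - m) * pi / 3"
  by (simp add: phi_eq field_simps)

lemma label_exists:
  assumes "\<bar>sin (3 * a)\<bar> < 271/100 * \<kappa>" "\<kappa> \<le> 1/1000"
  shows "\<exists>m::int. angle_near a (of_int m * pi / 3) (23/25 * \<kappa>)"
proof -
  obtain k :: int where k: "\<bar>3 * a - of_int k * pi\<bar> \<le> 101/100 * \<bar>sin (3 * a)\<bar>"
    using near_int_mult_pi_if_sin_small assms by fastforce
  have "\<bar>a - of_int k * pi / 3 - 2 * pi * of_int (0::int)\<bar> = \<bar>3 * a - of_int k * pi\<bar> / 3"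
    by (simp add: field_simps abs_div_pos[symmetric])
  also have "\<dots> < 23/25 * \<kappa>"
    using k assms(1) by simp
  finally show ?thesis
    unfolding angle_near_def by blast
qed

lemma label_unique:
  assumes "angle_near a (of_int m * pi / 3) e1" "angle_near a (of_int m' * pi / 3) e2"
    and "e1 + e2 \<le> 1/2"
  shows "m mod 6 = m' mod 6"
proof -
  obtain k :: int where k: "\<bar>of_int m * pi / 3 - of_int m' * pi / 3 - 2 * pi * of_int k\<bar> < e1 + e2"
    using angle_near_trans[OF angle_near_sym[OF assms(1)] assms(2)] unfolding angle_near_def by blast
  have "of_int m * pi / 3 - of_int m' * pi / 3 - 2 * pi * of_int k = pi / 3 * of_int (m - m' - 6 * k)"
    by (simp add: field_simps)
  then have "pi / 3 * \<bar>of_int (m - m' - 6 * k)\<bar> < 1/2"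
    using k assms(3) by (simp add: abs_mult)
  moreover have "1 \<le> \<bar>of_int (m - m' - 6 * k) :: real\<bar> \<Longrightarrow>
      pi / 3 * 1 \<le> pi / 3 * \<bar>of_int (m - m' - 6 * k) :: real\<bar>"
    by (intro mult_left_mono) auto
  moreover have "1/2 < pi / 3"
    using pi_ge_two by simp
  ultimately have "m - m' - 6 * k = 0"
    by linarith
  then show ?thesis
    by presburger
qed

lemma angle_near_label_cong:
  assumes "m mod 6 = m' mod 6" "angle_near x (of_int m * pi / 3) e"
  shows "angle_near x (of_int m' * pi / 3) e"
proof -
  obtain d where "m = m' + 6 * d"
    using assms(1) by (metis mod_eqE mult.commute)
  then have "of_int m * pi / 3 = of_int m' * pi / 3 + 2 * pi * of_int d"
    by (simp add: field_simps)
  then show ?thesis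
    using assms(2) by (metis angle_near_add_2pi)
qed

lemma abs_sin_label_off_axis:
  assumes "\<not> on_axis \<alpha> m"
  shows "17/20 \<le> \<bar>sin (of_int m * pi / 3 - phi \<alpha> + 2 * pi * of_int k)\<bar>"
proof -
  define j where "j = (m - phi_idx \<alpha>) mod 6"
  have j: "j = 1 \<or> j = 2 \<or> j = 4 \<or> j = 5"
    using assms unfolding on_axis_def j_def by presburger
  define q where "q = (m - phi_idx \<alpha>) div 6"
  have "m = phi_idx \<alpha> + j + 6 * q"
    unfolding j_def q_def by simp
  then have "of_int m * pi / 3 - phi \<alpha> + 2 * pi * of_int k = of_int j * pi / 3 + 2 * pi * of_int (k + q)"
    unfolding phi_eq by (simp add: field_simps)
  then have "sin (of_int m * pi / 3 - phi \<alpha> + 2 * pi * of_int k) = sin (of_int j * pi / 3)"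
    by (simp only: sin_add sin_int_2pin cos_int_2pin)
  moreover have "sin (2 * pi / 3) = sin (pi / 3)" "sin (4 * pi / 3) = - sin (pi / 3)"
    "sin (5 * pi / 3) = - sin (pi / 3)"
    using sin_pi_minus[of "pi / 3"] sin_periodic_pi[of "pi / 3"] sin_periodic_pi[of "2 * pi / 3"]
    by (simp_all add: field_simps)
  moreover have "17/10 \<le> sqrt (3::real)"
    by (rule real_le_rsqrt) (simp add: power2_eq_square)
  ultimately show ?thesis
    using j sin_60 by (auto simp: abs_if)
qed

lemma abs_sin_diff_sin_le: "\<bar>sin x - sin y\<bar> \<le> \<bar>x - (y::real)\<bar>"
proof -
  have "\<bar>sin x - sin y\<bar> = 2 * \<bar>sin ((x - y)/2)\<bar> * \<bar>cos ((x + y)/2)\<bar>"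
    unfolding sin_diff_sin by (simp add: abs_mult)
  also have "\<dots> \<le> 2 * \<bar>(x - y)/2\<bar> * 1"
    by (intro mult_mono abs_sin_x_le_abs_x) auto
  finally show ?thesis
    by simp
qed

lemma abs_sin_ge_off_axis:
  assumes "angle_near a (of_int m * pi / 3) e" "e \<le> 1/20" "\<not> on_axis \<alpha> m"
  shows "4/5 \<le> \<bar>sin (a - phi \<alpha>)\<bar>"
proof -
  obtain k :: int where k: "\<bar>a - of_int m * pi / 3 - 2 * pi * of_int k\<bar> < e"
    using assms(1) unfolding angle_near_def by blast
  define z where "z = of_int m * pi / 3 - phi \<alpha> + 2 * pi * of_int k"
  have "\<bar>sin (a - phi \<alpha>) - sin z\<bar> \<le> \<bar>(a - phi \<alpha>) - z\<bar>"
    by (rule abs_sin_diff_sin_le)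
  moreover have "(a - phi \<alpha>) - z = a - of_int m * pi / 3 - 2 * pi * of_int k"
    unfolding z_def by simp
  ultimately show ?thesis
    using abs_sin_label_off_axis[OF assms(3), of k] k assms(2) unfolding z_def by linarith
qed

lemma off_axis_edge:
  assumes close: "\<bar>cos (x - phi \<alpha>) - cos (y - phi \<alpha>)\<bar> < \<Gamma>" and "0 < \<Gamma>" "\<Gamma> \<le> 1/1000000"
    and "angle_near x (of_int m * pi / 3) L" "L \<le> 1/20" "\<not> on_axis \<alpha> m"
  shows "angle_near y x (3/2 * \<Gamma>) \<or> angle_near y (2 * phi \<alpha> - x) (3/2 * \<Gamma>)"
proof -
  have "4/5 \<le> \<bar>sin (x - phi \<alpha>)\<bar>"
    using abs_sin_ge_off_axis assms(4-6) .
  then have "angle_near y x (21/20 * \<Gamma> / (4/5)) \<or> angle_near y (2 * phi \<alpha> - x) (21/20 * \<Gamma> / (4/5))"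
    using assms(3) by (intro near_or_near_reflection[OF close]) (auto simp: power2_eq_square)
  then show ?thesis
    using angle_near_mono \<open>0 < \<Gamma>\<close> by fastforce
qed

lemma off_axis_edge_labels:
  assumes close: "\<bar>cos (x - phi \<alpha>) - cos (y - phi \<alpha>)\<bar> < \<Gamma>" and \<Gamma>: "0 < \<Gamma>" "\<Gamma> \<le> 1/1000000"
    and labels: "angle_near x (of_int m * pi / 3) L" "angle_near y (of_int m' * pi / 3) L"
    and "L \<le> 1/1000" "\<not> on_axis \<alpha> m"
  shows "angle_near y (edge_map \<alpha> (m' mod 6 \<noteq> m mod 6) x) (3/2 * \<Gamma>)" "\<not> on_axis \<alpha> m'"
proof -
  have small: "3/2 * \<Gamma> + L + L \<le> 1/2"
    using assms by simp
  have off: "(2 * phi_idx \<alpha> - m) mod 6 \<noteq> m mod 6"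
    using assms(7) unfolding on_axis_def by presburger
  from off_axis_edge[OF close \<Gamma> labels(1)] assms(6,7)
  consider "angle_near y x (3/2 * \<Gamma>)" | "angle_near y (2 * phi \<alpha> - x) (3/2 * \<Gamma>)"
    by fastforce
  then have "angle_near y (edge_map \<alpha> (m' mod 6 \<noteq> m mod 6) x) (3/2 * \<Gamma>) \<and> \<not> on_axis \<alpha> m'"
  proof cases
    case 1
    have "m mod 6 = m' mod 6"
      using label_unique[OF angle_near_trans[OF 1 labels(1)] labels(2) small] .
    moreover have "\<not> on_axis \<alpha> m'"
      using \<open>m mod 6 = m' mod 6\<close> assms(7) unfolding on_axis_def by presburger
    ultimately show ?thesis
      using 1 by (simp add: edge_map_def)
  next
    case 2
    have "angle_near y (of_int (2 * phi_idx \<alpha> - m) * pi / 3) (3/2 * \<Gamma> + L)"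
      using angle_near_trans[OF 2 angle_near_reflect[OF labels(1)]] by (simp add: reflect_label)
    then have "(2 * phi_idx \<alpha> - m) mod 6 = m' mod 6"
      using label_unique labels(2) small by blast
    moreover have "\<not> on_axis \<alpha> m'"
      using \<open>(2 * phi_idx \<alpha> - m) mod 6 = m' mod 6\<close> assms(7) unfolding on_axis_def by presburger
    ultimately show ?thesis
      using 2 off by (simp add: edge_map_def)
  qed
  then show "angle_near y (edge_map \<alpha> (m' mod 6 \<noteq> m mod 6) x) (3/2 * \<Gamma>)" "\<not> on_axis \<alpha> m'"
    by simp_all
qed

lemma cos_int_mult_pi: "cos (of_int m * pi) = (if even m then 1 else - 1)"
proof (cases "even m")
  case True
  then obtain j where "m = 2 * j" ..
  then show ?thesis
    using cos_int_2pin[of j] True by (simp add: ac_simps)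
next
  case False
  then obtain j where "m = 2 * j + 1" ..
  then have "of_int m * pi = 2 * pi * of_int j + pi"
    by (simp add: algebra_simps)
  then show ?thesis
    using False by (simp add: cos_add)
qed

lemma abs_cos_diff_cos_le: "\<bar>cos x - cos y\<bar> \<le> \<bar>x - (y::real)\<bar>"
proof -
  have "\<bar>cos x - cos y\<bar> = 2 * \<bar>sin ((x + y)/2)\<bar> * \<bar>sin ((y - x)/2)\<bar>"
    unfolding cos_diff_cos by (simp add: abs_mult)
  also have "\<dots> \<le> 2 * 1 * \<bar>(y - x)/2\<bar>"
    by (intro mult_mono abs_sin_x_le_abs_x) auto
  finally show ?thesis
    by (simp add: abs_minus_commute)
qed

lemma cos_triple_near_label:
  assumes "angle_near a (of_int m * pi / 3) e"
  shows "\<bar>cos (3 * a) - (if even m then 1 else - 1)\<bar> \<le> 3 * e"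
proof -
  obtain k :: int where k: "\<bar>a - of_int m * pi / 3 - 2 * pi * of_int k\<bar> < e"
    using assms unfolding angle_near_def by blast
  have "cos (of_int m * pi + 2 * pi * of_int (3 * k)) = cos (of_int m * pi)"
    by (simp only: cos_add sin_int_2pin cos_int_2pin)
  moreover have "\<bar>cos (3 * a) - cos (of_int m * pi + 2 * pi * of_int (3 * k))\<bar>
      \<le> \<bar>3 * (a - of_int m * pi / 3 - 2 * pi * of_int k)\<bar>"
    using abs_cos_diff_cos_le by (simp add: algebra_simps)
  ultimately show ?thesis
    using k by (simp add: cos_int_mult_pi abs_mult)
qed

lemma labels_same_parity:
  assumes "angle_near a (of_int m * pi / 3) e" "angle_near b (of_int m' * pi / 3) e"
    and "\<bar>cos (3 * a) - cos (3 * b)\<bar> \<le> c" "6 * e + c < 2"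
  shows "even (m - m')"
  using cos_triple_near_label[OF assms(1)] cos_triple_near_label[OF assms(2)] assms(3,4)
  by (auto split: if_splits)

section \<open>Paths in the cube\<close>

definition flip :: "nat \<Rightarrow> (nat \<Rightarrow> bool) \<Rightarrow> nat \<Rightarrow> bool" where
  "flip \<alpha> v = v(\<alpha> := \<not> v \<alpha>)"

lemma flip_apply: "flip \<alpha> v j = (if j = \<alpha> then \<not> v \<alpha> else v j)"
  by (simp add: flip_def)

lemma flip_in_cube: "v \<in> cube \<Longrightarrow> \<alpha> \<in> {1,2,3} \<Longrightarrow> flip \<alpha> v \<in> cube"
  by (auto simp: cube_def flip_apply)

lemma flip_flip [simp]: "flip \<alpha> (flip \<alpha> v) = v"
  by (simp add: flip_def)

lemma flip_commute: "flip \<alpha> (flip \<beta> v) = flip \<beta> (flip \<alpha> v)"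
  by (auto simp: flip_def fun_eq_iff)

lemma diff_coords_subset: "r \<in> cube \<Longrightarrow> v \<in> cube \<Longrightarrow> {\<alpha>. v \<alpha> \<noteq> r \<alpha>} \<subseteq> {1,2,3}"
  unfolding cube_def by auto

lemma finite_diff_coords: "r \<in> cube \<Longrightarrow> v \<in> cube \<Longrightarrow> finite {\<alpha>. v \<alpha> \<noteq> r \<alpha>}"
  by (rule finite_subset[OF diff_coords_subset]) auto

lemma card_diff_coords_le: "r \<in> cube \<Longrightarrow> v \<in> cube \<Longrightarrow> card {\<alpha>. v \<alpha> \<noteq> r \<alpha>} \<le> 3"
  using card_mono[OF _ diff_coords_subset, of r v] by simp

lemma card_diff_coords_flip:
  assumes "r \<in> cube" "u \<in> cube" "\<alpha> \<in> {1,2,3}" "u \<alpha> = r \<alpha>"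
  shows "card {\<beta>. flip \<alpha> u \<beta> \<noteq> r \<beta>} = Suc (card {\<beta>. u \<beta> \<noteq> r \<beta>})"
proof -
  have "{\<beta>. flip \<alpha> u \<beta> \<noteq> r \<beta>} = insert \<alpha> {\<beta>. u \<beta> \<noteq> r \<beta>}"
    using assms(4) by (auto simp: flip_apply)
  moreover have "finite {\<beta>. u \<beta> \<noteq> r \<beta>}"
    using assms(1,2) by (rule finite_diff_coords)
  ultimately show ?thesis
    using assms(4) by simp
qed

lemma cube_path_induct [consumes 2, case_names base step]:
  assumes "r \<in> cube" "v \<in> cube"
    and base: "P r"
    and step: "\<And>u \<alpha>. u \<in> cube \<Longrightarrow> \<alpha> \<in> {1,2,3} \<Longrightarrow> u \<alpha> = r \<alpha> \<Longrightarrow> P u \<Longrightarrow> P (flip \<alpha> u)"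
  shows "P v"
proof -
  have "\<forall>v\<in>cube. card {\<alpha>. v \<alpha> \<noteq> r \<alpha>} = n \<longrightarrow> P v" for n
  proof (induction n)
    case 0
    show ?case
    proof (intro ballI impI)
      fix v assume "v \<in> cube" "card {\<alpha>. v \<alpha> \<noteq> r \<alpha>} = 0"
      then have "{\<alpha>. v \<alpha> \<noteq> r \<alpha>} = {}"
        using finite_diff_coords[OF assms(1) \<open>v \<in> cube\<close>] by simp
      then have "v = r"
        by auto
      then show "P v"
        using base by simp
    qed
  next
    case (Suc n)
    show ?case
    proof (intro ballI impI)
      fix v assume v: "v \<in> cube" "card {\<alpha>. v \<alpha> \<noteq> r \<alpha>} = Suc n"
      then obtain \<alpha> where \<alpha>: "v \<alpha> \<noteq> r \<alpha>"
        by (metis (mono_tags, lifting) card.empty empty_Collect_eq nat.distinct(1))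
      then have "\<alpha> \<in> {1,2,3}"
        using diff_coords_subset[OF assms(1) v(1)] by blast
      define u where "u = flip \<alpha> v"
      have u: "u \<in> cube" "u \<alpha> = r \<alpha>" "v = flip \<alpha> u"
        using flip_in_cube[OF v(1) \<open>\<alpha> \<in> {1,2,3}\<close>] \<alpha> unfolding u_def by (simp_all add: flip_apply)
      then have "card {\<beta>. u \<beta> \<noteq> r \<beta>} = n"
        using card_diff_coords_flip[OF assms(1) u(1) \<open>\<alpha> \<in> {1,2,3}\<close> u(2)] v(2) by simp
      then have "P u"
        using Suc.IH u(1) by blast
      then show "P v"
        using step[OF u(1) \<open>\<alpha> \<in> {1,2,3}\<close> u(2)] u(3) by simp
    qed
  qed
  then show ?thesis
    using assms(2) by blast
qed

lemma cube_invariant: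
  assumes "\<forall>u\<in>cube. \<forall>\<alpha>\<in>{1,2,3}. g (flip \<alpha> u) = g u" "r \<in> cube" "v \<in> cube"
  shows "g v = g r"
  using assms(2,3) by (induction rule: cube_path_induct) (use assms(1) in auto)

lemma cube_abs_diff_le:
  fixes f :: "(nat \<Rightarrow> bool) \<Rightarrow> real"
  assumes edge: "\<forall>u\<in>cube. \<forall>\<alpha>\<in>{1,2,3}. \<bar>f (flip \<alpha> u) - f u\<bar> \<le> c"
    and "r \<in> cube" "v \<in> cube"
  shows "\<bar>f v - f r\<bar> \<le> 3 * c"
proof -
  have "0 \<le> c"
    using edge assms(2) by (meson abs_ge_zero insertI1 order_trans)
  have "\<bar>f v - f r\<bar> \<le> card {\<alpha>. v \<alpha> \<noteq> r \<alpha>} * c"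
    using assms(2,3)
  proof (induction rule: cube_path_induct)
    case (step u \<alpha>)
    then have "\<bar>f (flip \<alpha> u) - f r\<bar> \<le> c + card {\<beta>. u \<beta> \<noteq> r \<beta>} * c"
      using edge by (smt (verit, best))
    then show ?case
      using card_diff_coords_flip[OF assms(2) step(1-3)] by (simp add: algebra_simps)
  qed simp
  also have "\<dots> \<le> 3 * c"
    using card_diff_coords_le[OF assms(2,3)] \<open>0 \<le> c\<close> by (simp add: mult_right_mono)
  finally show ?thesis .
qed

text \<open>A direction \<open>\<beta> \<notin> {1,2,3}\<close> stands for no reflecting edge at all.\<close>
lemma cube_angle_path:
  assumes edge: "\<forall>u\<in>cube. \<forall>\<alpha>\<in>{1,2,3}. angle_near (\<theta> (flip \<alpha> u)) (edge_map \<alpha> (\<alpha> = \<beta>) (\<theta> u)) e"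
    and "3 * e < d" "r \<in> cube" "v \<in> cube"
  shows "angle_near (\<theta> v) (edge_map \<beta> (v \<beta> \<noteq> r \<beta>) (\<theta> r)) d"
proof -
  define \<delta> where "\<delta> = d - 3 * e"
  have "0 < \<delta>"
    using assms(2) unfolding \<delta>_def by simp
  have "angle_near (\<theta> v) (edge_map \<beta> (v \<beta> \<noteq> r \<beta>) (\<theta> r)) (card {\<alpha>. v \<alpha> \<noteq> r \<alpha>} * e + \<delta>)"
    using assms(3,4)
  proof (induction rule: cube_path_induct)
    case base
    show ?case
      using \<open>0 < \<delta>\<close> by (simp add: edge_map_def angle_near_refl)
  next
    case (step u \<alpha>)
    have "angle_near (edge_map \<alpha> (\<alpha> = \<beta>) (\<theta> u))
        (edge_map \<alpha> (\<alpha> = \<beta>) (edge_map \<beta> (u \<beta> \<noteq> r \<beta>) (\<theta> r))) (card {\<alpha>. u \<alpha> \<noteq> r \<alpha>} * e + \<delta>)"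
      using step(4) by (rule angle_near_edge_map)
    moreover have "edge_map \<alpha> (\<alpha> = \<beta>) (edge_map \<beta> (u \<beta> \<noteq> r \<beta>) (\<theta> r))
        = edge_map \<beta> (flip \<alpha> u \<beta> \<noteq> r \<beta>) (\<theta> r)"
      using step(3) by (auto simp: edge_map_def flip_apply)
    ultimately have "angle_near (\<theta> (flip \<alpha> u)) (edge_map \<beta> (flip \<alpha> u \<beta> \<noteq> r \<beta>) (\<theta> r))
        (e + (card {\<alpha>. u \<alpha> \<noteq> r \<alpha>} * e + \<delta>))"
      using angle_near_trans[OF edge[rule_format, OF step(1,2)]] by simp
    then show ?case
      using card_diff_coords_flip[OF assms(3) step(1-3)] by (simp add: algebra_simps)
  qed
  moreover have "0 < e"
    using angle_near_pos edge assms(3) by blast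
  then have "card {\<alpha>. v \<alpha> \<noteq> r \<alpha>} * e \<le> 3 * e"
    using card_diff_coords_le[OF assms(3,4)] by (intro mult_right_mono) auto
  then have "card {\<alpha>. v \<alpha> \<noteq> r \<alpha>} * e + \<delta> \<le> d"
    unfolding \<delta>_def by simp
  ultimately show ?thesis
    by (rule angle_near_mono)
qed

section \<open>The far regime\<close>

lemma abs_sin_square_diff_le: "\<bar>cos a - cos (b::real)\<bar> \<le> c \<Longrightarrow> \<bar>(sin a)^2 - (sin b)^2\<bar> \<le> 2 * c"
proof -
  assume c: "\<bar>cos a - cos b\<bar> \<le> c"
  have "(sin a)^2 - (sin b)^2 = (cos b)^2 - (cos a)^2"
    using sin_cos_squared_add[of a] sin_cos_squared_add[of b] by linarith
  also have "\<dots> = (cos b - cos a) * (cos b + cos a)"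
    by (simp add: power2_eq_square algebra_simps)
  finally have "(sin a)^2 - (sin b)^2 = (cos b - cos a) * (cos b + cos a)" .
  moreover have "\<bar>cos b + cos a\<bar> \<le> 2"
    using abs_cos_le_one[of a] abs_cos_le_one[of b] by linarith
  then have "\<bar>cos b - cos a\<bar> * \<bar>cos b + cos a\<bar> \<le> c * 2"
    using c by (intro mult_mono) (auto simp: abs_minus_commute)
  ultimately show ?thesis
    by (simp add: abs_mult)
qed

text \<open>The threshold \<open>27/10 \<kappa>\<close> for \<open>\<bar>sin (3 \<theta>)\<bar>\<close> separates the far from the near regime;
  the cube moves it by less than \<open>\<kappa> / 100\<close>.\<close>
lemma abs_sin_triple_spread:
  fixes a b \<kappa> \<Gamma> :: real
  assumes "\<bar>cos (3 * a) - cos (3 * b)\<bar> \<le> 27 * \<Gamma>" "\<Gamma> \<le> \<kappa>^2 / 1000000"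
  shows "27/10 * \<kappa> \<le> \<bar>sin (3 * a)\<bar> \<Longrightarrow> 269/100 * \<kappa> \<le> \<bar>sin (3 * b)\<bar>"
    and "\<bar>sin (3 * a)\<bar> < 27/10 * \<kappa> \<Longrightarrow> \<bar>sin (3 * b)\<bar> < 271/100 * \<kappa>"
proof -
  have "\<bar>(sin (3 * a))^2 - (sin (3 * b))^2\<bar> \<le> 54 * \<Gamma>"
    using abs_sin_square_diff_le[OF assms(1)] by simp
  then have sq: "(sin (3 * b))^2 \<le> (sin (3 * a))^2 + 54/1000000 * \<kappa>^2"
    "(sin (3 * a))^2 \<le> (sin (3 * b))^2 + 54/1000000 * \<kappa>^2"
    using assms(2) by (simp_all add: abs_le_iff)
  have k: "(27/10 * \<kappa>)^2 = 729/100 * \<kappa>^2" "(269/100 * \<kappa>)^2 = 72361/10000 * \<kappa>^2"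
    "(271/100 * \<kappa>)^2 = 73441/10000 * \<kappa>^2"
    by (simp_all add: power2_eq_square)
  show "269/100 * \<kappa> \<le> \<bar>sin (3 * b)\<bar>" if "27/10 * \<kappa> \<le> \<bar>sin (3 * a)\<bar>"
  proof (cases "0 \<le> \<kappa>")
    case True
    then have "(27/10 * \<kappa>)^2 \<le> (sin (3 * a))^2"
      using that abs_le_square_iff[of "27/10 * \<kappa>" "sin (3 * a)"] by simp
    then have "(269/100 * \<kappa>)^2 \<le> (sin (3 * b))^2"
      unfolding k using sq(2) zero_le_power2[of \<kappa>] by linarith
    then show ?thesis
      using True abs_le_square_iff[of "269/100 * \<kappa>" "sin (3 * b)"] by simp
  qed (use abs_ge_zero[of "sin (3 * b)"] in linarith)
  show "\<bar>sin (3 * b)\<bar> < 271/100 * \<kappa>" if "\<bar>sin (3 * a)\<bar> < 27/10 * \<kappa>"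
  proof -
    have "0 < \<kappa>"
      using that abs_ge_zero[of "sin (3 * a)"] by linarith
    then have "\<not> (27/10 * \<kappa>)^2 \<le> (sin (3 * a))^2"
      using that abs_le_square_iff[of "27/10 * \<kappa>" "sin (3 * a)"] by simp
    then have "(sin (3 * a))^2 < (27/10 * \<kappa>)^2"
      by simp
    then have "(sin (3 * b))^2 < (271/100 * \<kappa>)^2"
      unfolding k using sq(1) zero_le_power2[of \<kappa>] by linarith
    then have "\<not> (271/100 * \<kappa>) \<le> \<bar>sin (3 * b)\<bar>"
      using \<open>0 < \<kappa>\<close> abs_le_square_iff[of "271/100 * \<kappa>" "sin (3 * b)"] by simp
    then show ?thesis
      by simp
  qed
qed

lemma far_edge:
  assumes close: "\<bar>cos (x - phi \<alpha>) - cos (y - phi \<alpha>)\<bar> < \<Gamma>"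
    and far: "269/100 * \<kappa> \<le> \<bar>sin (3 * x)\<bar>" and "0 < \<kappa>" "\<Gamma> \<le> \<kappa>^2 / 1000000"
  shows "angle_near y x (6/5 * \<Gamma> / \<kappa>) \<or> angle_near y (2 * phi \<alpha> - x) (6/5 * \<Gamma> / \<kappa>)"
proof -
  let ?s = "269/300 * \<kappa>"
  have "?s \<le> \<bar>sin (x - phi \<alpha>)\<bar>"
    using abs_sin_triple_le[of x \<alpha>] far by simp
  moreover have "?s^2 = 72361/90000 * \<kappa>^2"
    by (simp add: power2_eq_square)
  then have "\<Gamma> \<le> ?s^2 / 10000"
    using assms(4) zero_le_power2[of \<kappa>] by linarith
  moreover have "0 < ?s"
    using \<open>0 < \<kappa>\<close> by simp
  ultimately have "angle_near y x (21/20 * \<Gamma> / ?s) \<or> angle_near y (2 * phi \<alpha> - x) (21/20 * \<Gamma> / ?s)"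
    by (intro near_or_near_reflection[OF close])
  moreover have "0 < \<Gamma>"
    using close abs_ge_zero by (rule le_less_trans[rotated])
  then have "21/20 * \<Gamma> / ?s \<le> 6/5 * \<Gamma> / \<kappa>"
    using \<open>0 < \<kappa>\<close> by (simp add: field_simps)
  ultimately show ?thesis
    using angle_near_mono by blast
qed

text \<open>Here \<open>t \<alpha> v\<close> says that the edge from \<open>v\<close> in direction \<open>\<alpha>\<close> reflects; a direction
  \<open>\<beta> \<notin> {1,2,3}\<close> in the conclusion stands for no reflecting edge at all.\<close>
lemma cube_single_reflecting_direction:
  fixes t :: "nat \<Rightarrow> (nat \<Rightarrow> bool) \<Rightarrow> bool"
  assumes sym: "\<forall>v\<in>cube. \<forall>\<alpha>\<in>{1,2,3}. t \<alpha> (flip \<alpha> v) = t \<alpha> v"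
    and face: "\<forall>v\<in>cube. \<forall>\<alpha>\<in>{1,2,3}. \<forall>\<beta>\<in>{1,2,3}. \<alpha> \<noteq> \<beta> \<longrightarrow>
      t \<alpha> (flip \<beta> v) = t \<alpha> v \<and> \<not> (t \<alpha> v \<and> t \<beta> v)"
    and "r \<in> cube"
  shows "\<exists>\<beta>. \<forall>v\<in>cube. \<forall>\<alpha>\<in>{1,2,3}. t \<alpha> v = (\<alpha> = \<beta>)"
proof -
  have const: "t \<alpha> v = t \<alpha> r" if "v \<in> cube" "\<alpha> \<in> {1,2,3}" for v \<alpha>
    using cube_invariant[of "t \<alpha>", OF _ \<open>r \<in> cube\<close> that(1)] sym face that(2) by metis
  obtain \<beta> where "\<forall>\<alpha>\<in>{1,2,3}. t \<alpha> r \<longleftrightarrow> \<alpha> = \<beta>"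
  proof (cases "\<exists>\<beta>\<in>{1,2,3}. t \<beta> r")
    case True
    then obtain \<beta> where "\<beta> \<in> {1,2,3}" "t \<beta> r" ..
    then show ?thesis
      using face \<open>r \<in> cube\<close> that[of \<beta>] by blast
  next
    case False
    then show ?thesis
      using that[of 0] by auto
  qed
  then show ?thesis
    using const by blast
qed

text \<open>In the far regime every edge is rigid, and whether it reflects is decided by
  going round the square faces.\<close>
lemma far_case_edge_types:
  assumes edges: "\<forall>v\<in>cube. \<forall>\<alpha>\<in>{1,2,3}. \<bar>cos (\<theta> v - phi \<alpha>) - cos (\<theta> (flip \<alpha> v) - phi \<alpha>)\<bar> < \<Gamma>"
    and far: "\<forall>v\<in>cube. 269/100 * \<kappa> \<le> \<bar>sin (3 * \<theta> v)\<bar>"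
    and \<kappa>: "0 < \<kappa>" "\<kappa> \<le> 1/1000" and \<Gamma>: "\<Gamma> \<le> \<kappa>^2 / 1000000" and "r \<in> cube"
  shows "\<exists>\<beta>. \<forall>v\<in>cube. \<forall>\<alpha>\<in>{1,2,3}.
    angle_near (\<theta> (flip \<alpha> v)) (edge_map \<alpha> (\<alpha> = \<beta>) (\<theta> v)) (6/5 * \<Gamma> / \<kappa>)"
proof -
  define e where "e = 6/5 * \<Gamma> / \<kappa>"
  define t where "t \<alpha> v \<longleftrightarrow> angle_near (\<theta> (flip \<alpha> v)) (2 * phi \<alpha> - \<theta> v) e" for \<alpha> v
  have typed: "angle_near (\<theta> (flip \<alpha> v)) (edge_map \<alpha> (t \<alpha> v) (\<theta> v)) e"
    if "v \<in> cube" "\<alpha> \<in> {1,2,3}" for v \<alpha>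
    using far_edge[OF edges[rule_format, OF that] far[rule_format, OF that(1)] \<kappa>(1) \<Gamma>]
    unfolding t_def e_def edge_map_def by auto
  have "t \<alpha> (flip \<alpha> u)" if "t \<alpha> u" for \<alpha> u
    using angle_near_reflect[OF angle_near_sym[OF that[unfolded t_def]], of "2 * phi \<alpha>"]
    unfolding t_def by simp
  then have sym: "\<forall>v\<in>cube. \<forall>\<alpha>\<in>{1,2,3}. t \<alpha> (flip \<alpha> v) = t \<alpha> v"
    by (metis flip_flip)
  have "\<Gamma> / \<kappa> \<le> \<kappa> / 1000000"
    using \<Gamma> \<kappa> by (simp add: field_simps power2_eq_square)
  moreover have "e = 6/5 * (\<Gamma> / \<kappa>)"
    unfolding e_def by simp
  ultimately have e: "e < 1/4" "\<forall>v\<in>cube. 6 * e < \<bar>sin (3 * \<theta> v)\<bar>"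
    using far \<kappa> by (linarith, fastforce)
  have "t \<alpha> v = t \<alpha> (flip \<beta> v) \<and> t \<beta> (flip \<alpha> v) = t \<beta> v \<and> \<not> (t \<alpha> v \<and> t \<beta> (flip \<alpha> v))"
    if "v \<in> cube" "\<alpha> \<in> {1,2,3}" "\<beta> \<in> {1,2,3}" "\<alpha> \<noteq> \<beta>" for v \<alpha> \<beta>
    using square_edge_types[OF that(2-4) typed[OF that(1,2)] typed[OF flip_in_cube[OF that(1,2)] that(3)]
        typed[OF that(1,3)] typed[OF flip_in_cube[OF that(1,3)] that(2), unfolded flip_commute[of \<alpha> \<beta>]]]
      e that(1) by blast
  then have "\<forall>v\<in>cube. \<forall>\<alpha>\<in>{1,2,3}. \<forall>\<beta>\<in>{1,2,3}. \<alpha> \<noteq> \<beta> \<longrightarrow>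
      t \<alpha> (flip \<beta> v) = t \<alpha> v \<and> \<not> (t \<alpha> v \<and> t \<beta> v)"
    by metis
  then obtain \<beta> where \<beta>: "\<forall>v\<in>cube. \<forall>\<alpha>\<in>{1,2,3}. t \<alpha> v = (\<alpha> = \<beta>)"
    using cube_single_reflecting_direction[OF sym _ \<open>r \<in> cube\<close>] by blast
  show ?thesis
  proof (intro exI ballI)
    fix v and \<alpha> :: nat
    assume v: "v \<in> cube" "\<alpha> \<in> {1,2,3}"
    then show "angle_near (\<theta> (flip \<alpha> v)) (edge_map \<alpha> (\<alpha> = \<beta>) (\<theta> v)) (6/5 * \<Gamma> / \<kappa>)"
      using typed[OF v] \<beta> unfolding e_def by simp
  qed
qed

section \<open>The near regime\<close>

text \<open>The direction \<open>\<alpha>\<close> whose axis contains \<open>m pi / 3\<close>; note \<open>phi_idx\<close> is \<open>0, 2, 1\<close> modulo 3.\<close>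
definition axis_of :: "int \<Rightarrow> nat" where
  "axis_of m = (if m mod 3 = 0 then 1 else if m mod 3 = 2 then 2 else 3)"

lemma mod3_cases: "(m::int) mod 3 = 0 \<or> m mod 3 = 1 \<or> m mod 3 = 2"
  by presburger

lemma on_axis_iff: "on_axis \<alpha> m \<longleftrightarrow> m mod 3 = phi_idx \<alpha> mod 3"
  by (simp add: on_axis_def mod_eq_dvd_iff dvd_eq_mod_eq_0)

lemma axis_of_in: "axis_of m \<in> {1,2,3}"
  by (simp add: axis_of_def)

lemma axis_of_eq_iff: "\<alpha> \<in> {1,2,3} \<Longrightarrow> axis_of m = \<alpha> \<longleftrightarrow> on_axis \<alpha> m"
  using mod3_cases[of m] by (auto simp: axis_of_def on_axis_iff phi_idx_def)

lemma axis_of_eq_axis_of: "axis_of m = axis_of m' \<longleftrightarrow> m mod 3 = m' mod 3"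
  using mod3_cases[of m] mod3_cases[of m'] by (auto simp: axis_of_def)

lemma label_cong_if_same_axis:
  assumes "axis_of m = axis_of m'" "even (m - m')"
  shows "m mod 6 = m' mod 6"
proof -
  have "3 dvd (m - m')" "2 dvd (m - m')"
    using assms by (simp_all add: axis_of_eq_axis_of mod_eq_dvd_iff)
  then have "3 * 2 dvd (m - m')"
    by (intro divides_mult) auto
  then show ?thesis
    by (simp add: mod_eq_dvd_iff)
qed

lemma axis_of_reflect:
  assumes "a \<in> {1,2,3}" "\<beta> \<in> {1,2,3}" "a \<noteq> \<beta>" "axis_of m = a"
  shows "axis_of (2 * phi_idx \<beta> - m) = 6 - a - \<beta>"
proof -
  have "(2 * phi_idx \<beta> - m) mod 3 = (2 * phi_idx \<beta> - m mod 3) mod 3"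
    by (simp add: mod_diff_right_eq)
  then show ?thesis
    using assms mod3_cases[of m] by (auto simp: axis_of_def phi_idx_def)
qed

lemma three_distinct_cover:
  fixes a b c :: nat
  assumes "a \<in> {1,2,3}" "b \<in> {1,2,3}" "c \<in> {1,2,3}" "a \<noteq> b" "a \<noteq> c" "b \<noteq> c"
  shows "x \<in> {1,2,3} \<longleftrightarrow> x = a \<or> x = b \<or> x = c"
  using assms by auto

lemma axis_classes_separated:
  fixes f :: "(nat \<Rightarrow> bool) \<Rightarrow> nat"
  assumes inv: "\<forall>v\<in>cube. \<forall>\<alpha>\<in>{1,2,3}. (f (flip \<alpha> v) = \<alpha>) = (f v = \<alpha>)"
    and u: "u \<in> cube" "f u \<in> {1,2,3}" and w: "w \<in> cube" "f w \<in> {1,2,3}" and "f u \<noteq> f w"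
    and \<gamma>: "\<gamma> \<in> {1,2,3}" "\<gamma> \<noteq> f u" "\<gamma> \<noteq> f w"
  shows "u \<gamma> \<noteq> w \<gamma>"
proof
  assume eq: "u \<gamma> = w \<gamma>"
  define x where "x = u(f u := w (f u))"
  have "\<forall>j. j \<in> {1,2,3} \<longrightarrow> j = f u \<or> j = f w \<or> j = \<gamma>"
    using three_distinct_cover[OF u(2) w(2) \<gamma>(1)] \<open>f u \<noteq> f w\<close> \<gamma>(2,3) by metis
  then have "\<forall>j. j \<noteq> f u \<and> j \<noteq> f w \<longrightarrow> u j = w j"
    using eq u(1) w(1) unfolding cube_def by blast
  then have x: "x = (if w (f u) = u (f u) then u else flip (f u) u)"
    "x = (if u (f w) = w (f w) then w else flip (f w) w)"
    unfolding x_def using \<open>f u \<noteq> f w\<close> by (auto simp: fun_eq_iff flip_apply)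
  have "f x = f u"
    using x(1) inv u by (cases "w (f u) = u (f u)") auto
  moreover have "f x = f w"
    using x(2) inv w by (cases "u (f w) = w (f w)") auto
  ultimately show False
    using \<open>f u \<noteq> f w\<close> by simp
qed

lemma at_most_two_axis_classes:
  fixes f :: "(nat \<Rightarrow> bool) \<Rightarrow> nat"
  assumes inv: "\<forall>v\<in>cube. \<forall>\<alpha>\<in>{1,2,3}. (f (flip \<alpha> v) = \<alpha>) = (f v = \<alpha>)"
    and f: "\<forall>v\<in>cube. f v \<in> {1,2,3}"
    and "u \<in> cube" "v \<in> cube" "w \<in> cube" "f u \<noteq> f v" "f u \<noteq> f w" "f v \<noteq> f w"
  shows False
proof -
  define x where "x j = (if j = f u then w j else if j = f v then u j else v j)" for j
  have x: "x \<in> cube"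
    using assms(4) f assms(3,4) unfolding cube_def x_def by auto
  have "f x = f u \<or> f x = f v \<or> f x = f w"
    using three_distinct_cover[of "f u" "f v" "f w" "f x"] f x assms(3-8) by blast
  then show False
  proof (elim disjE)
    assume "f x = f u"
    then show False
      using axis_classes_separated[OF inv x _ assms(4), of "f w"] f assms(3-8) x
      unfolding x_def by auto
  next
    assume "f x = f v"
    then show False
      using axis_classes_separated[OF inv x _ assms(5), of "f u"] f assms(3-8) x
      unfolding x_def by auto
  next
    assume "f x = f w"
    then show False
      using axis_classes_separated[OF inv x _ assms(3), of "f v"] f assms(3-8) x
      unfolding x_def by auto
  qed
qed

lemma on_axis_cong: "m mod 6 = m' mod 6 \<Longrightarrow> on_axis \<alpha> m \<longleftrightarrow> on_axis \<alpha> m'"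
  using mod_mod_cancel[of 3 6 m] mod_mod_cancel[of 3 6 m'] by (simp add: on_axis_iff)

lemma reflect_label_ne:
  assumes "\<not> on_axis \<alpha> m"
  shows "(2 * phi_idx \<alpha> - m) mod 6 \<noteq> m mod 6"
proof
  assume "(2 * phi_idx \<alpha> - m) mod 6 = m mod 6"
  then have "6 dvd 2 * (phi_idx \<alpha> - m)"
    by (simp add: mod_eq_dvd_iff algebra_simps)
  then obtain k where "2 * (phi_idx \<alpha> - m) = 6 * k"
    by (elim dvdE)
  then have "m - phi_idx \<alpha> = 3 * (- k)"
    by simp
  then have "3 dvd (m - phi_idx \<alpha>)"
    by (rule dvdI)
  then show False
    using assms by (simp add: on_axis_def dvd_eq_mod_eq_0)
qed

lemma off_axis_reflect:
  assumes "\<alpha> \<in> {1,2,3}" "\<beta> \<in> {1,2,3}" "\<alpha> \<noteq> \<beta>" "on_axis \<alpha> m"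
  shows "\<not> on_axis \<alpha> (2 * phi_idx \<beta> - m)"
proof -
  have "axis_of (2 * phi_idx \<beta> - m) = 6 - \<alpha> - \<beta>"
    using axis_of_reflect[OF assms(1-3)] axis_of_eq_iff[OF assms(1)] assms(4) by blast
  moreover have "6 - \<alpha> - \<beta> \<noteq> \<alpha>"
    using assms(1-3) by auto
  ultimately have "axis_of (2 * phi_idx \<beta> - m) \<noteq> \<alpha>"
    by simp
  then show ?thesis
    using axis_of_eq_iff[OF assms(1)] by blast
qed

text \<open>An edge in direction \<open>\<alpha>\<close> cannot enter or leave the class \<open>\<alpha>\<close>, hence no square
  face of directions \<open>\<alpha>, \<beta>\<close> contains both classes \<open>\<alpha>\<close> and \<open>\<beta>\<close>. So only two classes
  occur, and they are separated by the third direction.\<close>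
lemma axis_classes_two_sides:
  fixes f :: "(nat \<Rightarrow> bool) \<Rightarrow> nat"
  assumes f_inv: "\<forall>v\<in>cube. \<forall>\<alpha>\<in>{1,2,3}. (f (flip \<alpha> v) = \<alpha>) = (f v = \<alpha>)"
    and f_in: "\<forall>v\<in>cube. f v \<in> {1,2,3}"
    and "r \<in> cube" "w \<in> cube" "f w \<noteq> f r" "v \<in> cube"
    and \<beta>: "\<beta> \<in> {1,2,3}" "\<beta> \<noteq> f r" "\<beta> \<noteq> f w"
  shows "(f v = f r \<and> v \<beta> = r \<beta>) \<or> (f v = f w \<and> v \<beta> \<noteq> r \<beta>)"
proof -
  have "r \<beta> \<noteq> w \<beta>"
    using axis_classes_separated[OF f_inv assms(3) _ assms(4)] f_in assms(3-5) \<beta> by auto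
  moreover have "f v = f r \<or> f v = f w"
    using at_most_two_axis_classes[OF f_inv f_in assms(3,6,4)] \<open>f w \<noteq> f r\<close> by metis
  ultimately show ?thesis
    using axis_classes_separated[OF f_inv assms(6) _ assms(4)]
      axis_classes_separated[OF f_inv assms(3) _ assms(6)] f_in assms(3-6) \<beta>
    by (metis (full_types))
qed

lemma axis_label_pattern:
  fixes lab :: "(nat \<Rightarrow> bool) \<Rightarrow> int"
  assumes "r \<in> cube" "w \<in> cube" "lab w mod 6 \<noteq> lab r mod 6"
    and parity: "\<forall>v\<in>cube. even (lab v - lab r)"
    and inv: "\<forall>v\<in>cube. \<forall>\<alpha>\<in>{1,2,3}. on_axis \<alpha> (lab (flip \<alpha> v)) = on_axis \<alpha> (lab v)"
  shows "\<exists>\<beta>\<in>{1,2,3}. \<forall>v\<in>cube. \<not> on_axis \<beta> (lab v)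
    \<and> lab v mod 6 = (if v \<beta> = r \<beta> then lab r else 2 * phi_idx \<beta> - lab r) mod 6"
proof -
  define f where "f v = axis_of (lab v)" for v
  have f_in: "\<forall>v\<in>cube. f v \<in> {1,2,3}"
    unfolding f_def using axis_of_in by blast
  have f_inv: "\<forall>v\<in>cube. \<forall>\<alpha>\<in>{1,2,3}. (f (flip \<alpha> v) = \<alpha>) = (f v = \<alpha>)"
    using inv unfolding f_def by (simp add: axis_of_eq_iff)
  have "f w \<noteq> f r"
    using label_cong_if_same_axis parity assms(2,3) unfolding f_def by blast
  define \<beta> where "\<beta> = 6 - f r - f w"
  have "f r \<in> {1,2,3}" "f w \<in> {1,2,3}"
    using f_in assms(1,2) by auto
  then have \<beta>: "\<beta> \<in> {1,2,3}" "\<beta> \<noteq> f r" "\<beta> \<noteq> f w" "f w = 6 - f r - \<beta>"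
    using \<open>f w \<noteq> f r\<close> unfolding \<beta>_def by auto
  have side: "(f v = f r \<and> v \<beta> = r \<beta>) \<or> (f v = f w \<and> v \<beta> \<noteq> r \<beta>)" if "v \<in> cube" for v
    using axis_classes_two_sides[OF f_inv f_in assms(1,2) \<open>f w \<noteq> f r\<close> that \<beta>(1-3)] .
  have "lab v mod 6 = (if v \<beta> = r \<beta> then lab r else 2 * phi_idx \<beta> - lab r) mod 6"
    if "v \<in> cube" for v
  proof (cases "v \<beta> = r \<beta>")
    case True
    then have "axis_of (lab v) = axis_of (lab r)"
      using side[OF that] unfolding f_def by blast
    then have "lab v mod 6 = lab r mod 6"
      using label_cong_if_same_axis parity that by blast
    then show ?thesis
      using True by simp
  next
    case False
    have "axis_of (lab v) = axis_of (2 * phi_idx \<beta> - lab r)"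
      using axis_of_reflect[OF \<open>f r \<in> {1,2,3}\<close> \<beta>(1)] \<beta>(2,4) side[OF that] False
      unfolding f_def by auto
    moreover have "lab v - (2 * phi_idx \<beta> - lab r) = (lab v - lab r) + 2 * (lab r - phi_idx \<beta>)"
      by simp
    then have "even (lab v - (2 * phi_idx \<beta> - lab r))"
      using parity that by simp
    ultimately have "lab v mod 6 = (2 * phi_idx \<beta> - lab r) mod 6"
      by (rule label_cong_if_same_axis)
    then show ?thesis
      using False by simp
  qed
  moreover have "\<forall>v\<in>cube. \<not> on_axis \<beta> (lab v)"
    using side \<beta> axis_of_eq_iff[OF \<beta>(1)] unfolding f_def by metis
  ultimately show ?thesis
    using \<beta>(1) by blast
qed

lemma label_pattern_edges:
  fixes lab :: "(nat \<Rightarrow> bool) \<Rightarrow> int"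
  assumes "\<beta> \<in> {1,2,3}" "v \<in> cube"
    and label: "\<forall>v\<in>cube. lab v mod 6 = (if v \<beta> = r \<beta> then lab r else 2 * phi_idx \<beta> - lab r) mod 6"
  shows "lab (flip \<beta> v) mod 6 = (2 * phi_idx \<beta> - lab v) mod 6"
    and "\<alpha> \<in> {1,2,3} \<Longrightarrow> \<alpha> \<noteq> \<beta> \<Longrightarrow> lab (flip \<alpha> v) mod 6 = lab v mod 6"
proof -
  have v: "lab v mod 6 = (if v \<beta> = r \<beta> then lab r else 2 * phi_idx \<beta> - lab r) mod 6"
    and fv: "lab (flip \<beta> v) mod 6 = (if v \<beta> = r \<beta> then 2 * phi_idx \<beta> - lab r else lab r) mod 6"
    using label assms(2) flip_in_cube[OF assms(2,1)] by (auto simp: flip_apply)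
  have "(2 * phi_idx \<beta> - lab v) mod 6
      = (2 * phi_idx \<beta> - (if v \<beta> = r \<beta> then lab r else 2 * phi_idx \<beta> - lab r)) mod 6"
    using mod_diff_cong[OF refl v] .
  then show "lab (flip \<beta> v) mod 6 = (2 * phi_idx \<beta> - lab v) mod 6"
    using fv by simp
  show "lab (flip \<alpha> v) mod 6 = lab v mod 6" if "\<alpha> \<in> {1,2,3}" "\<alpha> \<noteq> \<beta>"
    using label assms(2) flip_in_cube[OF assms(2) that(1)] that(2) by (simp add: flip_apply)
qed

lemma angle_near_square_transfer:
  assumes "angle_near x3 (c - x0) e" "angle_near x2 (c - x1) e" "angle_near x2 x3 e"
  shows "angle_near x1 x0 (3 * e)"
proof -
  have "angle_near (c - x1) (c - x0) (e + e + e)"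
    using angle_near_trans[OF angle_near_trans[OF angle_near_sym[OF assms(2)] assms(3)] assms(1)] .
  then show ?thesis
    using angle_near_reflect[of "c - x1" "c - x0" _ c] by simp
qed

text \<open>An edge in direction \<open>\<alpha>\<close> leaving a spin off the \<open>\<alpha>\<close>-axis is rigid,
  so it never enters or leaves that axis; and \<open>cos (3 \<theta>) \<approx> (-1)\<^sup>m\<close> fixes the
  parity of all labels.\<close>
lemma near_case_labels:
  assumes edges: "\<forall>v\<in>cube. \<forall>\<alpha>\<in>{1,2,3}. \<bar>cos (\<theta> v - phi \<alpha>) - cos (\<theta> (flip \<alpha> v) - phi \<alpha>)\<bar> < \<Gamma>"
    and near: "\<forall>v\<in>cube. \<bar>sin (3 * \<theta> v)\<bar> < 271/100 * \<kappa>"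
    and cos3: "\<forall>v\<in>cube. \<bar>cos (3 * \<theta> v) - cos (3 * \<theta> r)\<bar> \<le> 27 * \<Gamma>"
    and \<kappa>: "\<kappa> \<le> 1/1000" and \<Gamma>: "0 < \<Gamma>" "\<Gamma> \<le> 1/1000000" and "r \<in> cube"
    and unclustered: "\<not> (\<exists>M::int. \<forall>v\<in>cube. angle_near (\<theta> v) (of_int M * pi / 3) \<kappa>)"
  obtains lab \<beta> where "\<beta> \<in> {1,2,3}"
    and "\<forall>v\<in>cube. angle_near (\<theta> v) (of_int (lab v) * pi / 3) (23/25 * \<kappa>)"
    and "\<forall>v\<in>cube. \<not> on_axis \<beta> (lab v)
      \<and> lab v mod 6 = (if v \<beta> = r \<beta> then lab r else 2 * phi_idx \<beta> - lab r) mod 6"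
proof -
  define L where "L = 23/25 * \<kappa>"
  have "\<forall>v\<in>cube. \<exists>m. angle_near (\<theta> v) (of_int m * pi / 3) L"
    using label_exists near \<kappa> unfolding L_def by blast
  then obtain lab where lab: "\<forall>v\<in>cube. angle_near (\<theta> v) (of_int (lab v) * pi / 3) L"
    by (rule bchoice[THEN exE]) blast
  have "0 < \<kappa>"
    using near \<open>r \<in> cube\<close> abs_ge_zero[of "sin (3 * \<theta> r)"] by fastforce
  then have L: "L \<le> 1/1000" "L \<le> \<kappa>"
    using \<kappa> unfolding L_def by auto
  have "\<not> on_axis \<alpha> (lab (flip \<alpha> v))"
    if "v \<in> cube" "\<alpha> \<in> {1,2,3}" "\<not> on_axis \<alpha> (lab v)" for v \<alpha>
    using off_axis_edge_labels(2)[OF edges[rule_format, OF that(1,2)] \<Gamma>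
        lab[rule_format, OF that(1)] lab[rule_format, OF flip_in_cube[OF that(1,2)]] L(1) that(3)] .
  then have inv: "\<forall>v\<in>cube. \<forall>\<alpha>\<in>{1,2,3}. on_axis \<alpha> (lab (flip \<alpha> v)) = on_axis \<alpha> (lab v)"
    using flip_in_cube by (metis flip_flip)
  have parity: "\<forall>v\<in>cube. even (lab v - lab r)"
    using labels_same_parity[OF lab[rule_format] lab[rule_format, OF \<open>r \<in> cube\<close>] cos3[rule_format]]
      L(1) \<Gamma>(2) by simp
  obtain w where "w \<in> cube" "lab w mod 6 \<noteq> lab r mod 6"
  proof (rule ccontr)
    assume "\<not> thesis"
    then have "\<forall>v\<in>cube. angle_near (\<theta> v) (of_int (lab r) * pi / 3) \<kappa>"
      using that lab angle_near_label_cong angle_near_mono L(2) by blast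
    then show False
      using unclustered by blast
  qed
  then show ?thesis
    using axis_label_pattern[OF \<open>r \<in> cube\<close> _ _ parity inv] that lab unfolding L_def by blast
qed

text \<open>The remaining edges, whose endpoints lie on their own axis, are controlled by going
  round a square face whose other three edges are rigid.\<close>
lemma near_case_edge_types:
  assumes edges: "\<forall>v\<in>cube. \<forall>\<alpha>\<in>{1,2,3}. \<bar>cos (\<theta> v - phi \<alpha>) - cos (\<theta> (flip \<alpha> v) - phi \<alpha>)\<bar> < \<Gamma>"
    and near: "\<forall>v\<in>cube. \<bar>sin (3 * \<theta> v)\<bar> < 271/100 * \<kappa>"
    and cos3: "\<forall>v\<in>cube. \<bar>cos (3 * \<theta> v) - cos (3 * \<theta> r)\<bar> \<le> 27 * \<Gamma>"
    and \<kappa>: "\<kappa> \<le> 1/1000" and \<Gamma>: "0 < \<Gamma>" "\<Gamma> \<le> 1/1000000" and "r \<in> cube"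
    and unclustered: "\<not> (\<exists>M::int. \<forall>v\<in>cube. angle_near (\<theta> v) (of_int M * pi / 3) \<kappa>)"
  shows "\<exists>\<beta>. \<forall>v\<in>cube. \<forall>\<alpha>\<in>{1,2,3}.
    angle_near (\<theta> (flip \<alpha> v)) (edge_map \<alpha> (\<alpha> = \<beta>) (\<theta> v)) (9/2 * \<Gamma>)"
proof -
  obtain lab \<beta> where \<beta>: "\<beta> \<in> {1,2,3}"
    and lab: "\<forall>v\<in>cube. angle_near (\<theta> v) (of_int (lab v) * pi / 3) (23/25 * \<kappa>)"
    and pattern: "\<forall>v\<in>cube. \<not> on_axis \<beta> (lab v)
      \<and> lab v mod 6 = (if v \<beta> = r \<beta> then lab r else 2 * phi_idx \<beta> - lab r) mod 6"
    by (rule near_case_labels[OF assms])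
  have label: "\<forall>v\<in>cube. lab v mod 6 = (if v \<beta> = r \<beta> then lab r else 2 * phi_idx \<beta> - lab r) mod 6"
    using pattern by blast
  have rigid: "angle_near (\<theta> (flip \<alpha> v)) (edge_map \<alpha> (lab (flip \<alpha> v) mod 6 \<noteq> lab v mod 6) (\<theta> v))
      (3/2 * \<Gamma>)" if "v \<in> cube" "\<alpha> \<in> {1,2,3}" "\<not> on_axis \<alpha> (lab v)" for v \<alpha>
    using off_axis_edge_labels(1)[OF edges[rule_format, OF that(1,2)] \<Gamma>
        lab[rule_format, OF that(1)] lab[rule_format, OF flip_in_cube[OF that(1,2)]] _ that(3)] \<kappa>
    by simp
  have reflecting: "angle_near (\<theta> (flip \<beta> v)) (2 * phi \<beta> - \<theta> v) (3/2 * \<Gamma>)" if "v \<in> cube" for v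
  proof -
    have "\<not> on_axis \<beta> (lab v)"
      using pattern that by blast
    then show ?thesis
      using rigid[OF that \<beta>] reflect_label_ne label_pattern_edges(1)[OF \<beta> that label]
      by (simp add: edge_map_def)
  qed
  have preserving: "angle_near (\<theta> (flip \<alpha> v)) (\<theta> v) (3/2 * \<Gamma>)"
    if "v \<in> cube" "\<alpha> \<in> {1,2,3}" "\<alpha> \<noteq> \<beta>" "\<not> on_axis \<alpha> (lab v)" for v \<alpha>
    using rigid[OF that(1,2,4)] label_pattern_edges(2)[OF \<beta> that(1) label that(2,3)]
    by (simp add: edge_map_def)
  have "angle_near (\<theta> (flip \<alpha> v)) (edge_map \<alpha> (\<alpha> = \<beta>) (\<theta> v)) (9/2 * \<Gamma>)"
    if v: "v \<in> cube" "\<alpha> \<in> {1,2,3}" for v \<alpha>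
  proof (cases "\<alpha> = \<beta> \<or> \<not> on_axis \<alpha> (lab v)")
    case True
    then show ?thesis
      using reflecting[OF v(1)] preserving[OF v] angle_near_mono \<Gamma>(1) by (auto simp: edge_map_def)
  next
    case False
    define u where "u = flip \<beta> v"
    have u: "u \<in> cube" "flip \<beta> (flip \<alpha> v) = flip \<alpha> u"
      unfolding u_def using flip_in_cube[OF v(1) \<beta>] by (simp_all add: flip_commute)
    have "\<not> on_axis \<alpha> (2 * phi_idx \<beta> - lab v)"
      using off_axis_reflect[OF v(2) \<beta>] False by blast
    then have "\<not> on_axis \<alpha> (lab u)"
      using label_pattern_edges(1)[OF \<beta> v(1) label] on_axis_cong unfolding u_def by metis
    then have "angle_near (\<theta> (flip \<alpha> u)) (\<theta> u) (3/2 * \<Gamma>)"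
      using preserving[OF u(1) v(2)] False by blast
    then have "angle_near (\<theta> (flip \<alpha> v)) (\<theta> v) (3 * (3/2 * \<Gamma>))"
      using angle_near_square_transfer[OF reflecting[OF v(1), folded u_def]
          reflecting[OF flip_in_cube[OF v], unfolded u(2)]] by blast
    then show ?thesis
      using False by (simp add: edge_map_def)
  qed
  then show ?thesis
    by blast
qed

lemma cube_edges_close:
  assumes "\<forall>r\<in>cube. \<forall>\<alpha>\<in>{1,2,3}. \<not> r \<alpha> \<longrightarrow> \<bar>Scomp \<theta> \<alpha> r - Scomp \<theta> \<alpha> (r(\<alpha> := True))\<bar> < \<Gamma>"
  shows "\<forall>v\<in>cube. \<forall>\<alpha>\<in>{1,2,3}. \<bar>cos (\<theta> v - phi \<alpha>) - cos (\<theta> (flip \<alpha> v) - phi \<alpha>)\<bar> < \<Gamma>"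
proof (intro ballI)
  fix v and \<alpha> :: nat
  assume v: "v \<in> cube" "\<alpha> \<in> {1,2,3}"
  show "\<bar>cos (\<theta> v - phi \<alpha>) - cos (\<theta> (flip \<alpha> v) - phi \<alpha>)\<bar> < \<Gamma>"
  proof (cases "v \<alpha>")
    case True
    have "flip \<alpha> v \<in> cube" "\<not> flip \<alpha> v \<alpha>" "(flip \<alpha> v)(\<alpha> := True) = v"
      using flip_in_cube[OF v] True by (auto simp: flip_def fun_eq_iff)
    then show ?thesis
      using assms v(2) unfolding Scomp_def by (metis abs_minus_commute)
  next
    case False
    then have "\<bar>Scomp \<theta> \<alpha> v - Scomp \<theta> \<alpha> (v(\<alpha> := True))\<bar> < \<Gamma>"
      using assms v by blast
    then show ?thesis
      using False unfolding Scomp_def flip_def by simp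
  qed
qed

lemma unclustered_labels:
  assumes "\<not> (\<exists>\<tau>\<in>{1..6}. \<forall>r\<in>cube. angdist (\<theta> r) (wang \<tau>) < \<kappa>)"
  shows "\<not> (\<exists>M::int. \<forall>v\<in>cube. angle_near (\<theta> v) (of_int M * pi / 3) \<kappa>)"
proof
  assume "\<exists>M::int. \<forall>v\<in>cube. angle_near (\<theta> v) (of_int M * pi / 3) \<kappa>"
  then obtain M :: int where M: "\<forall>v\<in>cube. angle_near (\<theta> v) (of_int M * pi / 3) \<kappa>" ..
  define \<tau> where "\<tau> = nat ((M - 1) mod 6) + 1"
  have "\<tau> \<in> {1..6}"
    unfolding \<tau>_def by (simp add: nat_le_iff)
  have "int \<tau> = (M - 1) mod 6 + 1"
    unfolding \<tau>_def by simp
  then have "M mod 6 = int \<tau> mod 6"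
    by (simp add: mod_add_left_eq)
  moreover have "of_int (int \<tau>) * pi / 3 = wang \<tau>"
    by (simp add: wang_def)
  ultimately have "\<forall>r\<in>cube. angdist (\<theta> r) (wang \<tau>) < \<kappa>"
    using M angle_near_label_cong[of M "int \<tau>"] by (simp add: angdist_less_iff)
  then show False
    using assms \<open>\<tau> \<in> {1..6}\<close> by blast
qed

lemma near_axis_if_near_own_reflection:
  assumes "angle_near x (2 * phi \<beta> - x) (2 * d)"
  shows "\<exists>M::int. angle_near x (of_int M * pi / 3) d"
proof -
  obtain k :: int where "\<bar>x - (2 * phi \<beta> - x) - 2 * pi * of_int k\<bar> < 2 * d"
    using assms unfolding angle_near_def by blast
  moreover have "x - (2 * phi \<beta> - x) - 2 * pi * of_int k
      = 2 * (x - of_int (phi_idx \<beta> + 3 * k) * pi / 3)"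
    by (simp add: phi_eq algebra_simps)
  ultimately have "\<bar>x - of_int (phi_idx \<beta> + 3 * k) * pi / 3 - 2 * pi * of_int (0::int)\<bar> < d"
    by (simp add: abs_mult)
  then show ?thesis
    unfolding angle_near_def by blast
qed

text \<open>If both alternatives held, \<open>\<theta> r\<close> would be close to its own reflection, hence to an
  axis, and all spins would be close to a single direction \<open>m pi / 3\<close>.\<close>
lemma alternatives_exclusive:
  assumes unclustered: "\<not> (\<exists>M::int. \<forall>v\<in>cube. angle_near (\<theta> v) (of_int M * pi / 3) \<kappa>)"
    and "2 * d \<le> \<kappa>" "r \<in> cube" "\<beta> \<in> {1,2,3}"
    and all: "\<forall>v\<in>cube. angle_near (\<theta> v) (\<theta> r) d"
    and opposite: "\<forall>v\<in>cube. v \<beta> \<noteq> r \<beta> \<longrightarrow> angle_near (\<theta> v) (2 * phi \<beta> - \<theta> r) d"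
  shows False
proof -
  have "flip \<beta> r \<in> cube" "flip \<beta> r \<beta> \<noteq> r \<beta>"
    using flip_in_cube[OF assms(3,4)] by (simp_all add: flip_apply)
  then have "angle_near (\<theta> r) (2 * phi \<beta> - \<theta> r) (2 * d)"
    using angle_near_trans[OF angle_near_sym[OF all[rule_format]] opposite[rule_format]] by fastforce
  then obtain M :: int where "angle_near (\<theta> r) (of_int M * pi / 3) d"
    using near_axis_if_near_own_reflection by blast
  then have "angle_near (\<theta> v) (of_int M * pi / 3) \<kappa>" if "v \<in> cube" for v
    using angle_near_trans[OF all[rule_format, OF that]] angle_near_mono \<open>2 * d \<le> \<kappa>\<close>
    by (metis mult_2)
  then have "\<forall>v\<in>cube. angle_near (\<theta> v) (of_int M * pi / 3) \<kappa>"
    by blast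
  then show False
    using unclustered by blast
qed

lemma cube_edge_types:
  assumes edges: "\<forall>v\<in>cube. \<forall>\<alpha>\<in>{1,2,3}. \<bar>cos (\<theta> v - phi \<alpha>) - cos (\<theta> (flip \<alpha> v) - phi \<alpha>)\<bar> < \<Gamma>"
    and \<kappa>: "0 < \<kappa>" "\<kappa> \<le> 1/1000" and \<Gamma>: "0 < \<Gamma>" "\<Gamma> \<le> \<kappa>^2 / 1000000" and "r \<in> cube"
    and unclustered: "\<not> (\<exists>M::int. \<forall>v\<in>cube. angle_near (\<theta> v) (of_int M * pi / 3) \<kappa>)"
  shows "\<exists>\<beta> e. 3 * e < 4 * \<Gamma> / \<kappa>
    \<and> (\<forall>v\<in>cube. \<forall>\<alpha>\<in>{1,2,3}. angle_near (\<theta> (flip \<alpha> v)) (edge_map \<alpha> (\<alpha> = \<beta>) (\<theta> v)) e)"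
proof -
  have "\<bar>cos (3 * \<theta> (flip \<alpha> u)) - cos (3 * \<theta> u)\<bar> \<le> 9 * \<Gamma>"
    if "u \<in> cube" "\<alpha> \<in> {1,2,3}" for u \<alpha>
  proof -
    have "\<bar>cos (\<theta> (flip \<alpha> u) - phi \<alpha>) - cos (\<theta> u - phi \<alpha>)\<bar> \<le> \<Gamma>"
      using edges that abs_minus_commute by (metis less_eq_real_def)
    then have "9 * \<bar>cos (\<theta> (flip \<alpha> u) - phi \<alpha>) - cos (\<theta> u - phi \<alpha>)\<bar> \<le> 9 * \<Gamma>"
      by simp
    then show ?thesis
      using cos_triple_diff_le[of "\<theta> (flip \<alpha> u)" "\<theta> u" \<alpha>] by (rule order_trans[rotated])
  qed
  then have cos3: "\<forall>v\<in>cube. \<bar>cos (3 * \<theta> v) - cos (3 * \<theta> r)\<bar> \<le> 27 * \<Gamma>"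
    using cube_abs_diff_le[of "\<lambda>v. cos (3 * \<theta> v)" "9 * \<Gamma>" r] \<open>r \<in> cube\<close> by simp
  show ?thesis
  proof (cases "27/10 * \<kappa> \<le> \<bar>sin (3 * \<theta> r)\<bar>")
    case True
    then have "\<forall>v\<in>cube. 269/100 * \<kappa> \<le> \<bar>sin (3 * \<theta> v)\<bar>"
      using abs_sin_triple_spread(1)[OF _ \<Gamma>(2)] cos3 abs_minus_commute by metis
    moreover have "3 * (6/5 * \<Gamma> / \<kappa>) < 4 * \<Gamma> / \<kappa>"
      using \<Gamma>(1) \<kappa>(1) by (simp add: field_simps)
    ultimately show ?thesis
      using far_case_edge_types[OF edges _ \<kappa> \<Gamma>(2) \<open>r \<in> cube\<close>] by blast
  next
    case False
    then have "\<forall>v\<in>cube. \<bar>sin (3 * \<theta> v)\<bar> < 271/100 * \<kappa>"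
      using abs_sin_triple_spread(2)[OF _ \<Gamma>(2)] cos3 abs_minus_commute not_le by metis
    moreover have "\<Gamma> \<le> 1/1000000"
      using \<Gamma>(2) \<kappa> power_le_one[of \<kappa> 2] by simp
    moreover have "3 * (9/2 * \<Gamma>) < 4 * \<Gamma> / \<kappa>"
      using \<Gamma>(1) \<kappa> by (simp add: field_simps)
    ultimately show ?thesis
      using near_case_edge_types[OF edges _ cos3 \<kappa>(2) \<Gamma>(1) _ \<open>r \<in> cube\<close> unclustered] by blast
  qed
qed

theorem spin_cube_dichotomy:
  assumes edges: "\<forall>v\<in>cube. \<forall>\<alpha>\<in>{1,2,3}. \<bar>cos (\<theta> v - phi \<alpha>) - cos (\<theta> (flip \<alpha> v) - phi \<alpha>)\<bar> < \<Gamma>"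
    and \<kappa>: "0 < \<kappa>" "\<kappa> \<le> 1/1000" and \<Gamma>: "0 < \<Gamma>" "\<Gamma> \<le> \<kappa>^2 / 1000000" and "r \<in> cube"
    and unclustered: "\<not> (\<exists>M::int. \<forall>v\<in>cube. angle_near (\<theta> v) (of_int M * pi / 3) \<kappa>)"
  defines "d \<equiv> 4 * \<Gamma> / \<kappa>"
  shows "(\<forall>v\<in>cube. angle_near (\<theta> v) (\<theta> r) d)
    \<noteq> (\<exists>\<beta>\<in>{1,2,3}. (\<forall>v\<in>cube. v \<beta> = r \<beta> \<longrightarrow> angle_near (\<theta> v) (\<theta> r) d)
        \<and> (\<forall>v\<in>cube. v \<beta> \<noteq> r \<beta> \<longrightarrow> angle_near (\<theta> v) (2 * phi \<beta> - \<theta> r) d))"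
proof -
  obtain \<beta> e where "3 * e < d"
    and "\<forall>v\<in>cube. \<forall>\<alpha>\<in>{1,2,3}. angle_near (\<theta> (flip \<alpha> v)) (edge_map \<alpha> (\<alpha> = \<beta>) (\<theta> v)) e"
    using cube_edge_types[OF assms(1-6) unclustered] unfolding d_def by blast
  then have path: "\<forall>v\<in>cube. angle_near (\<theta> v) (edge_map \<beta> (v \<beta> \<noteq> r \<beta>) (\<theta> r)) d"
    using cube_angle_path \<open>r \<in> cube\<close> by blast
  have "\<Gamma> / \<kappa> \<le> \<kappa> / 1000000"
    using \<Gamma> \<kappa> by (simp add: field_simps power2_eq_square)
  moreover have "2 * d = 8 * (\<Gamma> / \<kappa>)"
    unfolding d_def by simp
  ultimately have "2 * d \<le> \<kappa>"
    using \<kappa>(1) by linarith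
  let ?A = "\<forall>v\<in>cube. angle_near (\<theta> v) (\<theta> r) d"
  let ?B = "\<lambda>\<beta>. (\<forall>v\<in>cube. v \<beta> = r \<beta> \<longrightarrow> angle_near (\<theta> v) (\<theta> r) d)
    \<and> (\<forall>v\<in>cube. v \<beta> \<noteq> r \<beta> \<longrightarrow> angle_near (\<theta> v) (2 * phi \<beta> - \<theta> r) d)"
  have "?A \<or> (\<exists>\<beta>\<in>{1,2,3}. ?B \<beta>)"
  proof (cases "\<beta> \<in> {1,2,3}")
    case True
    then show ?thesis
      using path by (auto simp: edge_map_def)
  next
    case False
    then have "v \<beta> = r \<beta>" if "v \<in> cube" for v
      using that \<open>r \<in> cube\<close> unfolding cube_def by blast
    then show ?thesis
      using path by (simp add: edge_map_def)
  qed
  moreover have "\<not> (?A \<and> (\<exists>\<beta>\<in>{1,2,3}. ?B \<beta>))"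
  proof
    assume "?A \<and> (\<exists>\<beta>\<in>{1,2,3}. ?B \<beta>)"
    then obtain \<beta>' where "\<beta>' \<in> {1,2,3}" "?A"
      "\<forall>v\<in>cube. v \<beta>' \<noteq> r \<beta>' \<longrightarrow> angle_near (\<theta> v) (2 * phi \<beta>' - \<theta> r) d"
      by blast
    then show False
      by (rule alternatives_exclusive[OF unclustered \<open>2 * d \<le> \<kappa>\<close> \<open>r \<in> cube\<close>])
  qed
  ultimately show ?thesis
    by argo
qed

theorem proposition6p5:
  shows "\<exists>c0::real. c0 > 0 \<and>
    (\<forall>(\<kappa>::real) (\<Gamma>::real) (\<theta>::(nat \<Rightarrow> bool) \<Rightarrow> real).
       0 < \<kappa> \<and> 0 < \<Gamma> \<and> \<kappa> \<le> c0 \<and> sqrt \<Gamma> \<le> c0 * \<kappa> \<longrightarrow>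
       (\<forall>r\<in>cube. \<forall>\<alpha>\<in>{1,2,3}. \<not> r \<alpha> \<longrightarrow>
           \<bar>Scomp \<theta> \<alpha> r - Scomp \<theta> \<alpha> (r(\<alpha> := True))\<bar> < \<Gamma>) \<longrightarrow>
       \<not> (\<exists>\<tau>\<in>{1..6}. \<forall>r\<in>cube. angdist (\<theta> r) (wang \<tau>) < \<kappa>) \<longrightarrow>
       (\<forall>r\<in>cube.
          (\<forall>r'\<in>cube. angdist (\<theta> r') (\<theta> r) < 4 * \<Gamma> / \<kappa>)
          \<noteq>
          (\<exists>\<alpha>\<in>{1,2,3}.
             (\<forall>r'\<in>cube. r' \<alpha> = r \<alpha> \<longrightarrow> angdist (\<theta> r') (\<theta> r) < 4 * \<Gamma> / \<kappa>) \<and>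
             (\<forall>r'\<in>cube. r' \<alpha> \<noteq> r \<alpha> \<longrightarrow>
                 angdist (\<theta> r') (2 * phi \<alpha> - \<theta> r) < 4 * \<Gamma> / \<kappa>))))"
proof (intro exI[of _ "1/1000"] conjI allI impI ballI)
  fix \<kappa> \<Gamma> :: real and \<theta> :: "(nat \<Rightarrow> bool) \<Rightarrow> real" and r
  assume bounds: "0 < \<kappa> \<and> 0 < \<Gamma> \<and> \<kappa> \<le> 1/1000 \<and> sqrt \<Gamma> \<le> 1/1000 * \<kappa>"
    and edges: "\<forall>r\<in>cube. \<forall>\<alpha>\<in>{1,2,3}. \<not> r \<alpha> \<longrightarrow>
      \<bar>Scomp \<theta> \<alpha> r - Scomp \<theta> \<alpha> (r(\<alpha> := True))\<bar> < \<Gamma>"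
    and unclustered: "\<not> (\<exists>\<tau>\<in>{1..6}. \<forall>r\<in>cube. angdist (\<theta> r) (wang \<tau>) < \<kappa>)"
    and "r \<in> cube"
  have "\<Gamma> \<le> (1/1000 * \<kappa>)^2"
    using bounds real_sqrt_le_iff[of \<Gamma> "(1/1000 * \<kappa>)^2"] by simp
  moreover have "(1/1000 * \<kappa>)^2 = \<kappa>^2 / 1000000"
    by (simp add: power2_eq_square)
  ultimately have "\<Gamma> \<le> \<kappa>^2 / 1000000"
    by simp
  with bounds show "(\<forall>r'\<in>cube. angdist (\<theta> r') (\<theta> r) < 4 * \<Gamma> / \<kappa>) \<noteq>
    (\<exists>\<alpha>\<in>{1,2,3}. (\<forall>r'\<in>cube. r' \<alpha> = r \<alpha> \<longrightarrow> angdist (\<theta> r') (\<theta> r) < 4 * \<Gamma> / \<kappa>) \<and>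
      (\<forall>r'\<in>cube. r' \<alpha> \<noteq> r \<alpha> \<longrightarrow> angdist (\<theta> r') (2 * phi \<alpha> - \<theta> r) < 4 * \<Gamma> / \<kappa>))"
    unfolding angdist_less_iff
    by (intro spin_cube_dichotomy[OF cube_edges_close[OF edges] _ _ _ _ \<open>r \<in> cube\<close>
        unclustered_labels[OF unclustered]]) auto
qed simp

end
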